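(* Let $N\ge1$ be an integer, $0<\delta,f\le1$, and let $\Omega$ be a positive-definite verification operator for $|\Psi\rangle$ with second largest eigenvalue $\beta$ and smallest eigenvalue $\tau$, $0<\tau\le\beta<1$. Let $h=[\min\{\beta\ln\beta^{-1},\tau\ln\tau^{-1}\}]^{-1}$. Then $$F(N,\delta,\Omega)\ge\frac{N+1-(\ln\beta)^{-1}\ln(\tau\delta)}{N+1-(\ln\beta)^{-1}\ln(\tau\delta)-h\ln(\tau\delta)},\qquad \mathcal F(N,f,\Omega)\ge\frac{N+1-(\ln\beta)^{-1}\ln f}{N+1-(\ln\beta)^{-1}\ln f-h\ln f}.$$
   Context: Let $\mathcal H$ be a Hilbert space of finite dimension $D\ge2$ and $|\Psi\rangle\in\mathcal H$ a unit vector. A verification operator for $|\Psi\rangle$ is a Hermitian operator $\Omega$ on $\mathcal H$ with $0\le\Omega\le1$, $\Omega|\Psi\rangle=|\Psi\rangle$, whose eigenvalue $1$ is nondegenerate. For a density operator $\rho$ on $\mathcal H^{\otimes(N+1)}$ put $p_\rho=\mathrm{tr}[(\Omega^{\otimes N}\otimes1)\rho]$, $f_\rho=\mathrm{tr}[(\Omega^{\otimes N}\otimes|\Psi\rangle\langle\Psi|)\rho]$. With minimization over permutation-invariant density operators on $\mathcal H^{\otimes(N+1)}$: $F(N,\delta,\Omega)=\min\{f_\rho/p_\rho:p_\rho\ge\delta\}$ and $\mathcal F(N,f,\Omega)=\min\{f_\rho/p_\rho:f_\rho\ge f\}$. *)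

theory Defs
  imports "Jordan_Normal_Form.Char_Poly" "HOL-Combinatorics.Permutations"
begin

text \<open>The space H^{tensor n} is identified with C^(D^n): a basis index a < D^n encodes the
  tuple of local indices (digit D 0 a, ..., digit D (n-1) a); factor k is tensor slot k.\<close>

definition mtrace :: "complex mat \<Rightarrow> complex" where
  "mtrace A = (\<Sum>i<dim_row A. A $$ (i, i))"

definition hermitian_mat :: "nat \<Rightarrow> complex mat \<Rightarrow> bool" where
  "hermitian_mat n A \<longleftrightarrow> A \<in> carrier_mat n n \<and>
     (\<forall>i<n. \<forall>j<n. A $$ (i, j) = cnj (A $$ (j, i)))"

definition psd_mat :: "nat \<Rightarrow> complex mat \<Rightarrow> bool" where
  "psd_mat n A \<longleftrightarrow> hermitian_mat n A \<and>
     (\<forall>v \<in> carrier_vec n. 0 \<le> Re ((A *\<^sub>v v) \<bullet>c v))"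

definition pd_mat :: "nat \<Rightarrow> complex mat \<Rightarrow> bool" where
  "pd_mat n A \<longleftrightarrow> hermitian_mat n A \<and>
     (\<forall>v \<in> carrier_vec n. v \<noteq> 0\<^sub>v n \<longrightarrow> 0 < Re ((A *\<^sub>v v) \<bullet>c v))"

definition density_op :: "nat \<Rightarrow> complex mat \<Rightarrow> bool" where
  "density_op n \<rho> \<longleftrightarrow> psd_mat n \<rho> \<and> mtrace \<rho> = 1"

definition verification_operator :: "nat \<Rightarrow> complex mat \<Rightarrow> complex vec \<Rightarrow> bool" where
  "verification_operator D \<Omega> \<Psi> \<longleftrightarrow>
     \<Psi> \<in> carrier_vec D \<and> \<Psi> \<bullet>c \<Psi> = 1 \<and>
     psd_mat D \<Omega> \<and> psd_mat D (1\<^sub>m D - \<Omega>) \<and>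
     \<Omega> *\<^sub>v \<Psi> = \<Psi> \<and>
     (\<forall>v \<in> carrier_vec D. \<Omega> *\<^sub>v v = v \<longrightarrow> (\<exists>c. v = c \<cdot>\<^sub>v \<Psi>))"

definition digit :: "nat \<Rightarrow> nat \<Rightarrow> nat \<Rightarrow> nat" where
  "digit D k a = a div D ^ k mod D"

text \<open>Omega^{tensor N} tensor P on H^{tensor (N+1)} (P in the last slot, index N).\<close>
definition tensor_last :: "nat \<Rightarrow> nat \<Rightarrow> complex mat \<Rightarrow> complex mat \<Rightarrow> complex mat" where
  "tensor_last D N \<Omega> P = mat (D ^ (N + 1)) (D ^ (N + 1))
     (\<lambda>(a, b). (\<Prod>k<N. \<Omega> $$ (digit D k a, digit D k b)) * P $$ (digit D N a, digit D N b))"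

definition proj :: "nat \<Rightarrow> complex vec \<Rightarrow> complex mat" where
  "proj D \<Psi> = mat D D (\<lambda>(i, j). \<Psi> $ i * cnj (\<Psi> $ j))"

text \<open>Permutation of tensor slots acting on basis indices.\<close>
definition perm_index :: "nat \<Rightarrow> nat \<Rightarrow> (nat \<Rightarrow> nat) \<Rightarrow> nat \<Rightarrow> nat" where
  "perm_index D n \<pi> a = (\<Sum>k<n. digit D (\<pi> k) a * D ^ k)"

definition perm_invariant :: "nat \<Rightarrow> nat \<Rightarrow> complex mat \<Rightarrow> bool" where
  "perm_invariant D n \<rho> \<longleftrightarrow>
     (\<forall>\<pi>. \<pi> permutes {..<n} \<longrightarrow>
        (\<forall>a < D ^ n. \<forall>b < D ^ n. \<rho> $$ (perm_index D n \<pi> a, perm_index D n \<pi> b) = \<rho> $$ (a, b)))"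

definition p_val :: "nat \<Rightarrow> nat \<Rightarrow> complex mat \<Rightarrow> complex mat \<Rightarrow> real" where
  "p_val D N \<Omega> \<rho> = Re (mtrace (tensor_last D N \<Omega> (1\<^sub>m D) * \<rho>))"

definition f_val :: "nat \<Rightarrow> nat \<Rightarrow> complex mat \<Rightarrow> complex vec \<Rightarrow> complex mat \<Rightarrow> real" where
  "f_val D N \<Omega> \<Psi> \<rho> = Re (mtrace (tensor_last D N \<Omega> (proj D \<Psi>) * \<rho>))"

definition admissible :: "nat \<Rightarrow> nat \<Rightarrow> complex mat \<Rightarrow> bool" where
  "admissible D N \<rho> \<longleftrightarrow> density_op (D ^ (N + 1)) \<rho> \<and> perm_invariant D (N + 1) \<rho>"

end

theory Submission
  imports Defs "Jordan_Normal_Form.Schur_Decomposition"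
begin

text \<open>
  Diagonalise \<open>\<Omega>\<close> in an orthonormal eigenbasis: \<open>\<Psi>\<close> spans the eigenvalue 1 and every other
  eigenvalue lies in \<open>[\<tau>, \<beta>]\<close>. In the product basis, \<open>p\<close>, \<open>f\<close> and
  \<open>y = tr ((\<Omega> \<otimes> \<dots> \<otimes> \<Omega>) \<rho>)\<close> (with \<open>N + 1\<close> factors) are expectations of products of
  eigenvalues under the diagonal \<open>R\<close> of \<open>\<rho>\<close>, a probability distribution on configurations
  \<open>c : {0..N} \<rightarrow> {0..<D}\<close> that is invariant under permuting the slots. Averaging over the slot
  that carries the projector gives \<open>(N + 1) (f - B p) = E\<^sub>R [\<Sum>\<^sub>j (\<Lambda> / \<lambda>\<^sub>j) ([\<lambda>\<^sub>j = 1] - B)]\<close>,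
  where \<open>\<lambda>\<^sub>j\<close> is the eigenvalue in slot \<open>j\<close> and \<open>\<Lambda> = \<Prod>\<^sub>j \<lambda>\<^sub>j\<close>. Each summand is at least
  \<open>\<Lambda> ((1 - B) - c ln (1 / \<lambda>\<^sub>j))\<close> with \<open>c = (1 - B) / ln (1 / \<beta>) + B h\<close>; this is where
  \<open>h \<lambda> ln (1 / \<lambda>) \<ge> 1\<close> on \<open>[\<tau>, \<beta>]\<close> enters. The bound \<open>B\<close> of the theorem is exactly the value
  with \<open>(N + 1) (1 - B) = c a\<close>, where \<open>a = - ln x\<close>, so the sum over \<open>j\<close> equals
  \<open>c E\<^sub>R [\<Lambda> (a + ln \<Lambda>)]\<close>. By convexity of \<open>t ln t\<close> this is nonnegative as soon as
  \<open>y = E\<^sub>R [\<Lambda>] \<ge> x\<close>, and indeed \<open>y \<ge> \<tau> p \<ge> \<tau> \<delta>\<close> and \<open>y \<ge> f\<close>.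
\<close>

section \<open>Digits of tensor indices\<close>

lemma digit_less: "0 < D \<Longrightarrow> digit D k a < D"
  by (simp add: digit_def)

lemma digit_0: "digit D 0 a = a mod D"
  by (simp add: digit_def)

lemma digit_Suc: "digit D (Suc k) a = digit D k (a div D)"
  by (simp add: digit_def div_mult2_eq mult.commute)

lemma digit_expansion_Suc: "(\<Sum>k<Suc n. f k * (D::nat) ^ k) = f 0 + D * (\<Sum>k<n. f (Suc k) * D ^ k)"
  by (subst sum.lessThan_Suc_shift) (simp add: sum_distrib_left mult_ac)

lemma digit_expansion: "0 < D \<Longrightarrow> a < D ^ n \<Longrightarrow> (\<Sum>k<n. digit D k a * D ^ k) = a"
proof (induction n arbitrary: a)
  case (Suc n)
  have "a div D < D ^ n"
    using Suc.prems by (simp add: less_mult_imp_div_less mult.commute)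
  then have "(\<Sum>k<n. digit D k (a div D) * D ^ k) = a div D"
    using Suc by blast
  then show ?case
    by (simp only: digit_expansion_Suc digit_0 digit_Suc) simp
qed simp

lemma digit_expansion_less: "(\<forall>k<n. f k < (D::nat)) \<Longrightarrow> (\<Sum>k<n. f k * D ^ k) < D ^ n"
proof (induction n arbitrary: f)
  case (Suc n)
  have "(\<Sum>k<n. f (Suc k) * D ^ k) < D ^ n"
    using Suc by auto
  then have "(\<Sum>k<n. f (Suc k) * D ^ k) + 1 \<le> D ^ n"
    by linarith
  then have "D * ((\<Sum>k<n. f (Suc k) * D ^ k) + 1) \<le> D * D ^ n"
    by (rule mult_le_mono2)
  moreover have "f 0 < D"
    using Suc.prems by simp
  ultimately show ?case
    by (simp only: digit_expansion_Suc) (simp add: algebra_simps)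
qed simp

lemma digit_digit_expansion: "(\<forall>k<n. f k < D) \<Longrightarrow> j < n \<Longrightarrow> digit D j (\<Sum>k<n. f k * D ^ k) = f j"
proof (induction n arbitrary: f j)
  case (Suc n)
  then have "0 < D" and "f 0 < D"
    by auto
  with Suc show ?case
    by (cases j) (simp_all only: digit_expansion_Suc digit_0 digit_Suc, auto)
qed simp

lemma digits_eq_imp_eq:
  "0 < D \<Longrightarrow> a < D ^ n \<Longrightarrow> b < D ^ n \<Longrightarrow> (\<forall>k<n. digit D k a = digit D k b) \<Longrightarrow> a = b"
  by (metis (no_types, lifting) digit_expansion sum.cong lessThan_iff)

lemma perm_index_less: "0 < D \<Longrightarrow> perm_index D n \<pi> a < D ^ n"
  unfolding perm_index_def by (rule digit_expansion_less) (simp add: digit_less)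

lemma digit_perm_index: "0 < D \<Longrightarrow> j < n \<Longrightarrow> digit D j (perm_index D n \<pi> a) = digit D (\<pi> j) a"
  unfolding perm_index_def by (rule digit_digit_expansion) (auto simp: digit_less)

lemma bij_betw_perm_index:
  assumes D: "0 < D" and \<pi>: "\<pi> permutes {..<n}"
  shows "bij_betw (perm_index D n \<pi>) {..<D ^ n} {..<D ^ n}"
proof -
  have "inj_on (perm_index D n \<pi>) {..<D ^ n}"
  proof (rule inj_onI)
    fix a b
    assume a: "a \<in> {..<D ^ n}" and b: "b \<in> {..<D ^ n}"
      and eq: "perm_index D n \<pi> a = perm_index D n \<pi> b"
    have "digit D (\<pi> j) a = digit D (\<pi> j) b" if "j < n" for j
      using arg_cong[OF eq, of "digit D j"] by (simp add: digit_perm_index[OF D that])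
    then have "\<forall>k<n. digit D k a = digit D k b"
      using \<pi> by (metis lessThan_iff permutes_def)
    then show "a = b"
      using digits_eq_imp_eq[OF D] a b by auto
  qed
  moreover have "perm_index D n \<pi> ` {..<D ^ n} = {..<D ^ n}"
    by (rule endo_inj_surj) (use calculation perm_index_less[OF D] in auto)
  ultimately show ?thesis
    by (simp add: bij_betw_def)
qed

section \<open>Spectral decomposition of Hermitian matrices\<close>

lemma cscalar_prod_eq_sum:
  "v \<in> carrier_vec n \<Longrightarrow> w \<in> carrier_vec n \<Longrightarrow> v \<bullet>c w = (\<Sum>x<n. v $ x * cnj (w $ x))"
  by (simp add: scalar_prod_def atLeast0LessThan)

lemma cscalar_prod_smult_left:
  "v \<in> carrier_vec n \<Longrightarrow> w \<in> carrier_vec n \<Longrightarrow> (c \<cdot>\<^sub>v v) \<bullet>c w = c * (v \<bullet>c w)"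
  by (simp add: cscalar_prod_eq_sum sum_distrib_left mult_ac)

lemma cscalar_prod_smult_right:
  "v \<in> carrier_vec n \<Longrightarrow> w \<in> carrier_vec n \<Longrightarrow> v \<bullet>c (c \<cdot>\<^sub>v w) = cnj c * (v \<bullet>c w)"
  by (simp add: cscalar_prod_eq_sum sum_distrib_left mult_ac)

lemma cnj_cscalar_prod: "v \<in> carrier_vec n \<Longrightarrow> w \<in> carrier_vec n \<Longrightarrow> cnj (v \<bullet>c w) = w \<bullet>c v"
  by (simp add: cscalar_prod_eq_sum cnj_sum mult.commute)

lemma mult_mat_vec_index_sum:
  "A \<in> carrier_mat n m \<Longrightarrow> v \<in> carrier_vec m \<Longrightarrow> x < n \<Longrightarrow> (A *\<^sub>v v) $ x = (\<Sum>y<m. A $$ (x, y) * v $ y)"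
  by (auto simp: scalar_prod_def atLeast0LessThan row_def)

lemma mult_mat_index_sum:
  "A \<in> carrier_mat n m \<Longrightarrow> B \<in> carrier_mat m k \<Longrightarrow> x < n \<Longrightarrow> y < k \<Longrightarrow>
   (A * B) $$ (x, y) = (\<Sum>z<m. A $$ (x, z) * B $$ (z, y))"
  by (auto simp: scalar_prod_def atLeast0LessThan row_def col_def)

lemma mat_adjoint_dim [simp]:
  "dim_row (mat_adjoint A) = dim_col A" "dim_col (mat_adjoint A) = dim_row A"
  unfolding mat_adjoint_def mat_of_rows_def by simp_all

lemma mat_adjoint_carrier [simp]: "A \<in> carrier_mat n m \<Longrightarrow> mat_adjoint A \<in> carrier_mat m n"
  unfolding carrier_mat_def by simp

lemma mat_adjoint_index [simp]:
  "i < dim_col A \<Longrightarrow> j < dim_row A \<Longrightarrow> mat_adjoint (A :: complex mat) $$ (i, j) = cnj (A $$ (j, i))"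
  unfolding mat_adjoint_def mat_of_rows_def by simp

lemma mat_adjoint_mult:
  assumes A: "A \<in> carrier_mat n m" and B: "B \<in> carrier_mat m k"
  shows "mat_adjoint (A * B) = mat_adjoint B * mat_adjoint (A :: complex mat)"
proof (rule eq_matI)
  fix i j
  assume "i < dim_row (mat_adjoint B * mat_adjoint A)" "j < dim_col (mat_adjoint B * mat_adjoint A)"
  then have i: "i < k" and j: "j < n"
    using A B by auto
  have "mat_adjoint (A * B) $$ (i, j) = cnj ((A * B) $$ (j, i))"
    using A B i j by simp
  also have "\<dots> = (\<Sum>z<m. cnj (A $$ (j, z)) * cnj (B $$ (z, i)))"
    unfolding mult_mat_index_sum[OF A B j i] by (simp add: cnj_sum)
  also have "\<dots> = (\<Sum>z<m. mat_adjoint B $$ (i, z) * mat_adjoint A $$ (z, j))"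
    using A B i j by (intro sum.cong refl) (simp add: mult.commute)
  also have "\<dots> = (mat_adjoint B * mat_adjoint A) $$ (i, j)"
    by (rule mult_mat_index_sum[OF mat_adjoint_carrier[OF B] mat_adjoint_carrier[OF A] i j, symmetric])
  finally show "mat_adjoint (A * B) $$ (i, j) = (mat_adjoint B * mat_adjoint A) $$ (i, j)" .
qed (use A B in simp_all)

lemma hermitian_mat_carrier: "hermitian_mat n A \<Longrightarrow> A \<in> carrier_mat n n"
  unfolding hermitian_mat_def by blast

lemma hermitian_mat_index: "hermitian_mat n A \<Longrightarrow> i < n \<Longrightarrow> j < n \<Longrightarrow> A $$ (i, j) = cnj (A $$ (j, i))"
  unfolding hermitian_mat_def by blast

lemma hermitian_mat_adjoint:
  assumes H: "hermitian_mat n A"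
  shows "mat_adjoint A = A"
proof (rule eq_matI)
  fix i j
  assume "i < dim_row A" "j < dim_col A"
  with hermitian_mat_carrier[OF H] show "mat_adjoint A $$ (i, j) = A $$ (i, j)"
    using hermitian_mat_index[OF H, of j i] by simp
qed (use hermitian_mat_carrier[OF H] in simp_all)

lemma hermitian_cscalar_prod:
  assumes H: "hermitian_mat n A" and v: "v \<in> carrier_vec n" and w: "w \<in> carrier_vec n"
  shows "(A *\<^sub>v v) \<bullet>c w = v \<bullet>c (A *\<^sub>v w)"
proof -
  have A: "A \<in> carrier_mat n n"
    using H by (rule hermitian_mat_carrier)
  have "(A *\<^sub>v v) \<bullet>c w = (\<Sum>x<n. \<Sum>y<n. A $$ (x, y) * v $ y * cnj (w $ x))"
    using A v w
    by (simp add: cscalar_prod_eq_sum[of _ n] mult_mat_vec_index_sum[OF A v] sum_distrib_right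
        del: index_mult_mat_vec)
  also have "\<dots> = (\<Sum>y<n. \<Sum>x<n. v $ y * cnj (A $$ (y, x)) * cnj (w $ x))"
  proof (subst sum.swap, intro sum.cong refl)
    fix x y
    assume "x \<in> {..<n}" "y \<in> {..<n}"
    then have "A $$ (y, x) = cnj (A $$ (x, y))"
      by (intro hermitian_mat_index[OF H]) auto
    then show "A $$ (y, x) * v $ x * cnj (w $ y) = v $ x * cnj (A $$ (x, y)) * cnj (w $ y)"
      by simp
  qed
  also have "\<dots> = v \<bullet>c (A *\<^sub>v w)"
    using A v w
    by (simp add: cscalar_prod_eq_sum[of _ n] mult_mat_vec_index_sum[OF A w] sum_distrib_left cnj_sum
        mult_ac del: index_mult_mat_vec)
  finally show ?thesis .
qed

lemma hermitian_eigenvalue_real: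
  assumes H: "hermitian_mat n A" and v: "v \<in> carrier_vec n" "v \<noteq> 0\<^sub>v n"
    and ev: "A *\<^sub>v v = r \<cdot>\<^sub>v v"
  shows "cnj r = r"
proof -
  have "r * (v \<bullet>c v) = cnj r * (v \<bullet>c v)"
    using hermitian_cscalar_prod[OF H v(1) v(1)]
    by (simp add: ev cscalar_prod_smult_left[OF v(1) v(1)] cscalar_prod_smult_right[OF v(1) v(1)])
  then show ?thesis
    using conjugate_square_eq_0_vec[OF v(1)] v(2) by simp
qed

lemma mtrace_mult_comm:
  assumes A: "A \<in> carrier_mat n m" and B: "B \<in> carrier_mat m n"
  shows "mtrace (A * B) = mtrace (B * A)"
proof -
  have "mtrace (A * B) = (\<Sum>i<n. \<Sum>z<m. A $$ (i, z) * B $$ (z, i))"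
    unfolding mtrace_def using A B by (intro sum.cong) (auto simp: mult_mat_index_sum[OF A B] simp del: index_mult_mat(1))
  also have "\<dots> = (\<Sum>z<m. \<Sum>i<n. B $$ (z, i) * A $$ (i, z))"
    by (subst sum.swap) (simp add: mult.commute)
  also have "\<dots> = mtrace (B * A)"
    unfolding mtrace_def using A B by (intro sum.cong) (auto simp: mult_mat_index_sum[OF B A] simp del: index_mult_mat(1))
  finally show ?thesis .
qed

lemma mtrace_add: "A \<in> carrier_mat n n \<Longrightarrow> B \<in> carrier_mat n n \<Longrightarrow> mtrace (A + B) = mtrace A + mtrace B"
  by (simp add: mtrace_def sum.distrib)

lemma mtrace_minus: "A \<in> carrier_mat n n \<Longrightarrow> B \<in> carrier_mat n n \<Longrightarrow> mtrace (A - B) = mtrace A - mtrace B"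
  by (simp add: mtrace_def sum_subtractf)

lemma mtrace_smult: "A \<in> carrier_mat n n \<Longrightarrow> mtrace (c \<cdot>\<^sub>m A) = c * mtrace A"
  by (simp add: mtrace_def sum_distrib_left)

lemma mtrace_hermitian_real:
  assumes H: "hermitian_mat n A"
  shows "Im (mtrace A) = 0"
proof -
  have "Im (A $$ (i, i)) = 0" if "i < n" for i
    using arg_cong[OF hermitian_mat_index[OF H that that], of Im] by simp
  then show ?thesis
    using hermitian_mat_carrier[OF H] by (simp add: mtrace_def Im_sum)
qed

lemma smult_mat_mult_vec:
  "(A :: complex mat) \<in> carrier_mat n m \<Longrightarrow> v \<in> carrier_vec m \<Longrightarrow> (c \<cdot>\<^sub>m A) *\<^sub>v v = c \<cdot>\<^sub>v (A *\<^sub>v v)"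
  by (intro eq_vecI) (auto intro!: scalar_prod_smult_left)

lemma mtrace_eq_sum_list_char_poly_roots:
  assumes C: "C \<in> carrier_mat n n" and cp: "char_poly C = (\<Prod>a\<leftarrow>es. [:- a, 1:])"
  shows "mtrace C = sum_list (es :: complex list)"
proof -
  obtain B P Q where sd: "schur_decomposition C es = (B, P, Q)"
    by (cases "schur_decomposition C es")
  from schur_decomposition[OF C cp sd]
  have sim: "similar_mat_wit C B P Q" and diag: "diag_mat B = es"
    by auto
  then have B: "B \<in> carrier_mat n n" and P: "P \<in> carrier_mat n n" and Q: "Q \<in> carrier_mat n n"
    and QP: "Q * P = 1\<^sub>m n" and CB: "C = P * B * Q"
    using C unfolding similar_mat_wit_def Let_def by auto
  have "mtrace C = mtrace (P * (B * Q))"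
    using CB B P Q by (simp add: assoc_mult_mat)
  also have "\<dots> = mtrace ((B * Q) * P)"
    using B P Q by (intro mtrace_mult_comm) auto
  also have "\<dots> = mtrace B"
    using B P Q QP by (simp add: assoc_mult_mat)
  also have "\<dots> = sum_list es"
    using B by (simp add: mtrace_def diag[symmetric] diag_mat_def interv_sum_list_conv_sum_set_nat atLeast0LessThan)
  finally show ?thesis .
qed

lemma eigenvalue_neq_if_mtrace_neq:
  fixes C :: "complex mat"
  assumes C: "C \<in> carrier_mat n n" and tr: "mtrace C \<noteq> of_nat n * z"
  shows "\<exists>e. eigenvalue C e \<and> e \<noteq> z"
proof -
  obtain es where es: "char_poly C = (\<Prod>a\<leftarrow>es. [:- a, 1:])" "length es = n"
    using char_poly_factorized[OF C] by blast
  have "\<exists>e\<in>set es. e \<noteq> z"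
  proof (rule ccontr)
    assume "\<not> ?thesis"
    then have "es = replicate n z"
      using es(2) by (metis replicate_length_same)
    with tr show False
      using mtrace_eq_sum_list_char_poly_roots[OF C es(1)] by (simp add: sum_list_replicate)
  qed
  then show ?thesis
    using eigenvalue_root_char_poly[OF C] es(1) linear_poly_root by auto
qed

lemma smult_vec_eq_imp_zero:
  assumes "v \<in> carrier_vec n" "a \<cdot>\<^sub>v v = b \<cdot>\<^sub>v v" "a \<noteq> (b :: complex)"
  shows "v = 0\<^sub>v n"
proof (rule eq_vecI)
  fix x
  assume "x < dim_vec (0\<^sub>v n :: complex vec)"
  then have "a * v $ x = b * v $ x"
    using arg_cong[OF assms(2), of "\<lambda>v. v $ x"] assms(1) by simp
  with assms(3) show "v $ x = 0\<^sub>v n $ x"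
    using \<open>x < dim_vec (0\<^sub>v n)\<close> by simp
qed (use assms in simp)

text \<open>The matrix \<open>A - A P + \<i> P\<close> agrees with \<open>A\<close> on the kernel of \<open>P\<close> and acts as \<open>\<i>\<close> on
  the range of \<open>P\<close>. Its trace has imaginary part \<open>k < n\<close>, so it has an eigenvalue other than \<open>\<i>\<close>,
  and every eigenvector for such an eigenvalue lies in the kernel of \<open>P\<close>.\<close>
lemma commuting_projection_kernel_eigenvector:
  fixes A P :: "complex mat"
  assumes A: "A \<in> carrier_mat n n" and P: "P \<in> carrier_mat n n"
    and PP: "P * P = P" and AP: "A * P = P * A"
    and trP: "mtrace P = of_nat k" and k: "k < n"
    and trA: "Im (mtrace A) = 0" and trAP: "Im (mtrace (A * P)) = 0"
  shows "\<exists>w e. w \<in> carrier_vec n \<and> w \<noteq> 0\<^sub>v n \<and> P *\<^sub>v w = 0\<^sub>v n \<and> A *\<^sub>v w = e \<cdot>\<^sub>v w"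
proof -
  define C where "C = A - A * P + \<i> \<cdot>\<^sub>m P"
  have C: "C \<in> carrier_mat n n"
    using A P by (simp add: C_def)
  have "mtrace C = mtrace (A - A * P) + mtrace (\<i> \<cdot>\<^sub>m P)"
    unfolding C_def using A P by (intro mtrace_add) auto
  also have "\<dots> = mtrace A - mtrace (A * P) + \<i> * mtrace P"
    using A P by (simp add: mtrace_minus[of A n] mtrace_smult[OF P])
  finally have "Im (mtrace C) = of_nat k"
    using trA trAP trP by simp
  with k obtain e where "eigenvalue C e" and e: "e \<noteq> \<i>"
    using eigenvalue_neq_if_mtrace_neq[OF C, of \<i>] by force
  then obtain w where w: "w \<in> carrier_vec n" "w \<noteq> 0\<^sub>v n" and Cw: "C *\<^sub>v w = e \<cdot>\<^sub>v w"
    unfolding eigenvalue_def eigenvector_def using C by auto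
  have PC: "P * C = \<i> \<cdot>\<^sub>m P"
  proof -
    have "P * C = P * (A - A * P) + P * (\<i> \<cdot>\<^sub>m P)"
      unfolding C_def using A P by (intro mult_add_distrib_mat) auto
    also have "\<dots> = P * A - P * (A * P) + \<i> \<cdot>\<^sub>m (P * P)"
      using A P by (simp add: mult_minus_distrib_mat[OF P A] mult_smult_distrib[OF P P])
    also have "P * (A * P) = P * A"
      using A P AP PP by (metis assoc_mult_mat)
    also have "P * A - P * A = 0\<^sub>m n n"
      using A P by (intro minus_r_inv_mat) simp
    finally show ?thesis
      using P PP by simp
  qed
  have "\<i> \<cdot>\<^sub>v (P *\<^sub>v w) = (P * C) *\<^sub>v w"
    using P w by (simp add: PC smult_mat_mult_vec)
  also have "\<dots> = e \<cdot>\<^sub>v (P *\<^sub>v w)"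
    using P C w by (simp add: assoc_mult_mat_vec Cw mult_mat_vec)
  finally have Pw: "P *\<^sub>v w = 0\<^sub>v n"
    using P w e by (intro smult_vec_eq_imp_zero) auto
  have "C *\<^sub>v w = (A - A * P) *\<^sub>v w + (\<i> \<cdot>\<^sub>m P) *\<^sub>v w"
    unfolding C_def using A P w by (intro add_mult_distrib_mat_vec) auto
  also have "(A - A * P) *\<^sub>v w = A *\<^sub>v w - A *\<^sub>v (P *\<^sub>v w)"
    using A P w by (simp add: minus_mult_distrib_mat_vec assoc_mult_mat_vec[OF A P w(1)])
  also have "(\<i> \<cdot>\<^sub>m P) *\<^sub>v w = \<i> \<cdot>\<^sub>v (P *\<^sub>v w)"
    by (rule smult_mat_mult_vec[OF P w(1)])
  finally have "C *\<^sub>v w = A *\<^sub>v w - A *\<^sub>v 0\<^sub>v n + \<i> \<cdot>\<^sub>v 0\<^sub>v n"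
    unfolding Pw .
  also have "\<dots> = A *\<^sub>v w"
    using A w(1) by (intro eq_vecI) auto
  finally have "A *\<^sub>v w = e \<cdot>\<^sub>v w"
    using Cw by simp
  with w Pw show ?thesis
    by blast
qed

lemma orthonormal_mat_adjoint_mult:
  fixes cs :: "nat \<Rightarrow> complex vec"
  assumes cs: "\<forall>i<k. cs i \<in> carrier_vec n"
    and orthonormal: "\<forall>i<k. \<forall>j<k. cs i \<bullet>c cs j = (if i = j then 1 else 0)"
  defines "U \<equiv> mat n k (\<lambda>(x, i). cs i $ x)"
  shows "mat_adjoint U * U = 1\<^sub>m k"
proof (rule eq_matI)
  have U: "U \<in> carrier_mat n k"
    by (simp add: U_def)
  fix i j
  assume "i < dim_row (1\<^sub>m k)" "j < dim_col (1\<^sub>m k)"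
  then have ij: "i < k" "j < k"
    by auto
  have "(mat_adjoint U * U) $$ (i, j) = (\<Sum>x<n. cs j $ x * cnj (cs i $ x))"
    using ij by (subst mult_mat_index_sum[OF mat_adjoint_carrier[OF U] U]) (auto simp: U_def mult.commute)
  also have "\<dots> = 1\<^sub>m k $$ (i, j)"
    using cs orthonormal ij by (auto simp: cscalar_prod_eq_sum[symmetric])
  finally show "(mat_adjoint U * U) $$ (i, j) = 1\<^sub>m k $$ (i, j)" .
qed (simp_all add: U_def)

lemma mult_eigenvector_cols:
  fixes A :: "complex mat" and lam :: "nat \<Rightarrow> real"
  assumes A: "A \<in> carrier_mat n n" and cs: "\<forall>i<k. cs i \<in> carrier_vec n"
    and eigen: "\<forall>i<k. A *\<^sub>v cs i = complex_of_real (lam i) \<cdot>\<^sub>v cs i"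
  defines "U \<equiv> mat n k (\<lambda>(x, i). cs i $ x)"
    and "L \<equiv> mat k k (\<lambda>(i, j). if i = j then complex_of_real (lam i) else 0)"
  shows "A * U = U * L"
proof (rule eq_matI)
  have U: "U \<in> carrier_mat n k" and L: "L \<in> carrier_mat k k"
    by (simp_all add: U_def L_def)
  fix x j
  assume "x < dim_row (U * L)" "j < dim_col (U * L)"
  then have xj: "x < n" "j < k"
    using U L by auto
  have "(A * U) $$ (x, j) = (\<Sum>y<n. A $$ (x, y) * cs j $ y)"
    using xj by (subst mult_mat_index_sum[OF A U]) (auto simp: U_def)
  also have "\<dots> = (A *\<^sub>v cs j) $ x"
    using xj cs by (simp add: mult_mat_vec_index_sum[OF A] del: index_mult_mat_vec)
  also have "\<dots> = complex_of_real (lam j) * cs j $ x"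
    using eigen xj cs by auto
  also have "\<dots> = (\<Sum>i<k. U $$ (x, i) * L $$ (i, j))"
    using xj by (simp add: U_def L_def if_distrib[of "\<lambda>t. _ * t"] mult.commute cong: if_cong)
  also have "\<dots> = (U * L) $$ (x, j)"
    using xj by (subst mult_mat_index_sum[OF U L]) auto
  finally show "(A * U) $$ (x, j) = (U * L) $$ (x, j)" .
qed (use A in \<open>simp_all add: U_def L_def\<close>)

lemma eigenvector_span_projection:
  fixes A :: "complex mat" and lam :: "nat \<Rightarrow> real"
  assumes H: "hermitian_mat n A"
    and cs: "\<forall>i<k. cs i \<in> carrier_vec n"
    and orthonormal: "\<forall>i<k. \<forall>j<k. cs i \<bullet>c cs j = (if i = j then 1 else 0)"
    and eigen: "\<forall>i<k. A *\<^sub>v cs i = complex_of_real (lam i) \<cdot>\<^sub>v cs i"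
  defines "U \<equiv> mat n k (\<lambda>(x, i). cs i $ x)"
  defines "P \<equiv> U * mat_adjoint U"
  shows "P * P = P" and "A * P = P * A" and "mtrace P = of_nat k" and "Im (mtrace (A * P)) = 0"
proof -
  define L where "L = mat k k (\<lambda>(i, j). if i = j then complex_of_real (lam i) else 0)"
  define V where "V = mat_adjoint U"
  have A: "A \<in> carrier_mat n n"
    using H by (rule hermitian_mat_carrier)
  have U: "U \<in> carrier_mat n k" and V: "V \<in> carrier_mat k n" and L: "L \<in> carrier_mat k k"
    by (simp_all add: U_def V_def L_def)
  have VU: "V * U = 1\<^sub>m k"
    unfolding V_def U_def by (rule orthonormal_mat_adjoint_mult[OF cs orthonormal])
  have AU: "A * U = U * L"
    unfolding U_def L_def by (rule mult_eigenvector_cols[OF A cs eigen])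
  have VA: "V * A = L * V"
  proof -
    have "mat_adjoint L = L"
      by (intro eq_matI) (auto simp: L_def)
    then show ?thesis
      using mat_adjoint_mult[OF A U] mat_adjoint_mult[OF U L] hermitian_mat_adjoint[OF H] AU
      by (simp add: V_def)
  qed
  have AP: "A * P = U * (L * V)"
    unfolding P_def V_def[symmetric] using A U V L
    by (simp add: assoc_mult_mat[OF A U V, symmetric] AU assoc_mult_mat[OF U L V])
  also have "\<dots> = P * A"
    using A U V by (simp add: P_def V_def[symmetric] VA[symmetric] assoc_mult_mat)
  finally show "A * P = P * A" .
  have "P * P = U * ((V * U) * V)"
    using U V by (simp add: P_def V_def[symmetric] assoc_mult_mat[of U n k V n "U * V" n]
        assoc_mult_mat[of V k n U k V n])
  then show "P * P = P"
    using U V by (simp add: VU P_def V_def[symmetric])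
  show "mtrace P = of_nat k"
    using mtrace_mult_comm[OF U V] VU by (simp add: P_def V_def[symmetric] mtrace_def)
  have "mtrace (A * P) = mtrace ((L * V) * U)"
    unfolding AP using U L V by (simp add: mtrace_mult_comm[of U n k "L * V"])
  also have "\<dots> = mtrace L"
    using U L V by (simp add: assoc_mult_mat[OF L V U] VU)
  finally show "Im (mtrace (A * P)) = 0"
    by (simp add: mtrace_def L_def Im_sum)
qed

lemma orthonormal_projection_kernel:
  fixes cs :: "nat \<Rightarrow> complex vec"
  assumes cs: "\<forall>i<k. cs i \<in> carrier_vec n"
    and orthonormal: "\<forall>i<k. \<forall>j<k. cs i \<bullet>c cs j = (if i = j then 1 else 0)"
    and w: "w \<in> carrier_vec n"
  defines "U \<equiv> mat n k (\<lambda>(x, i). cs i $ x)"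
  assumes Pw: "(U * mat_adjoint U) *\<^sub>v w = 0\<^sub>v n"
  shows "\<forall>i<k. w \<bullet>c cs i = 0"
proof (intro allI impI)
  define V where "V = mat_adjoint U"
  have U: "U \<in> carrier_mat n k" and V: "V \<in> carrier_mat k n"
    by (simp_all add: U_def V_def)
  have VU: "V * U = 1\<^sub>m k"
    unfolding V_def U_def by (rule orthonormal_mat_adjoint_mult[OF cs orthonormal])
  have "V *\<^sub>v w = (V * U) *\<^sub>v (V *\<^sub>v w)"
    using V w by (simp add: VU)
  also have "\<dots> = V *\<^sub>v ((U * V) *\<^sub>v w)"
    using U V w by (simp add: assoc_mult_mat_vec)
  also have "\<dots> = V *\<^sub>v 0\<^sub>v n"
    using Pw by (simp add: V_def)
  also have "\<dots> = 0\<^sub>v k"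
    using V by (intro eq_vecI) auto
  finally have Vw: "V *\<^sub>v w = 0\<^sub>v k" .
  fix i
  assume i: "i < k"
  have "w \<bullet>c cs i = (\<Sum>x<n. w $ x * cnj (cs i $ x))"
    using cs i w by (intro cscalar_prod_eq_sum) auto
  also have "\<dots> = (V *\<^sub>v w) $ i"
    using i by (subst mult_mat_vec_index_sum[OF V w i]) (auto simp: V_def U_def mult.commute)
  finally show "w \<bullet>c cs i = 0"
    using Vw i by simp
qed

lemma hermitian_eigenvector_orthogonal:
  fixes A :: "complex mat" and lam :: "nat \<Rightarrow> real"
  assumes H: "hermitian_mat n A" and k: "k < n"
    and cs: "\<forall>i<k. cs i \<in> carrier_vec n"
    and orthonormal: "\<forall>i<k. \<forall>j<k. cs i \<bullet>c cs j = (if i = j then 1 else 0)"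
    and eigen: "\<forall>i<k. A *\<^sub>v cs i = complex_of_real (lam i) \<cdot>\<^sub>v cs i"
  shows "\<exists>w e. w \<in> carrier_vec n \<and> w \<noteq> 0\<^sub>v n \<and> (\<forall>i<k. w \<bullet>c cs i = 0) \<and> A *\<^sub>v w = e \<cdot>\<^sub>v w"
proof -
  define U where "U = mat n k (\<lambda>(x, i). cs i $ x)"
  have "U \<in> carrier_mat n k"
    by (simp add: U_def)
  then have P: "U * mat_adjoint U \<in> carrier_mat n n"
    by simp
  note projection = eigenvector_span_projection[OF H cs orthonormal eigen, folded U_def]
  obtain w e where "w \<in> carrier_vec n" "w \<noteq> 0\<^sub>v n" "(U * mat_adjoint U) *\<^sub>v w = 0\<^sub>v n"
    and "A *\<^sub>v w = e \<cdot>\<^sub>v w"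
    using commuting_projection_kernel_eigenvector[OF hermitian_mat_carrier[OF H] P projection(1,2,3) k
        mtrace_hermitian_real[OF H] projection(4)]
    by blast
  with orthonormal_projection_kernel[OF cs orthonormal, folded U_def] show ?thesis
    by blast
qed

lemma cscalar_prod_self_real:
  fixes w :: "complex vec"
  assumes "w \<in> carrier_vec n" "w \<noteq> 0\<^sub>v n"
  shows "w \<bullet>c w = complex_of_real (Re (w \<bullet>c w))" and "0 < Re (w \<bullet>c w)"
proof -
  have "0 < w \<bullet>c w"
    using assms by simp
  then show "w \<bullet>c w = complex_of_real (Re (w \<bullet>c w))" and "0 < Re (w \<bullet>c w)"
    by (auto simp: less_complex_def complex_eq_iff)
qed

lemma hermitian_orthonormal_eigenvectors:
  fixes A :: "complex mat"
  assumes H: "hermitian_mat n A"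
  shows "k \<le> n \<Longrightarrow> \<exists>cs (lam :: nat \<Rightarrow> real). (\<forall>i<k. cs i \<in> carrier_vec n) \<and>
     (\<forall>i<k. \<forall>j<k. cs i \<bullet>c cs j = (if i = j then 1 else 0)) \<and>
     (\<forall>i<k. A *\<^sub>v cs i = complex_of_real (lam i) \<cdot>\<^sub>v cs i)"
proof (induction k)
  case (Suc k)
  then obtain cs and lam :: "nat \<Rightarrow> real" where cs: "\<forall>i<k. cs i \<in> carrier_vec n"
    and orthonormal: "\<forall>i<k. \<forall>j<k. cs i \<bullet>c cs j = (if i = j then 1 else 0)"
    and eigen: "\<forall>i<k. A *\<^sub>v cs i = complex_of_real (lam i) \<cdot>\<^sub>v cs i"
    by auto
  obtain w e where w: "w \<in> carrier_vec n" "w \<noteq> 0\<^sub>v n" and orth: "\<forall>i<k. w \<bullet>c cs i = 0"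
    and Aw: "A *\<^sub>v w = e \<cdot>\<^sub>v w"
    using hermitian_eigenvector_orthogonal[OF H _ cs orthonormal eigen] Suc.prems by auto
  have A: "A \<in> carrier_mat n n"
    using H by (rule hermitian_mat_carrier)
  have "Im e = 0"
    using arg_cong[OF hermitian_eigenvalue_real[OF H w Aw], of Im] by simp
  then have e: "e = complex_of_real (Re e)"
    by (simp add: complex_eq_iff)
  define s where "s = Re (w \<bullet>c w)"
  define u where "u = complex_of_real (1 / sqrt s) \<cdot>\<^sub>v w"
  have u: "u \<in> carrier_vec n"
    using w by (simp add: u_def)
  have "u \<bullet>c u = complex_of_real (1 / sqrt s) * complex_of_real (1 / sqrt s) * (w \<bullet>c w)"
    using w by (simp add: u_def cscalar_prod_smult_left[of _ n] cscalar_prod_smult_right[of _ n])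
  then have uu: "u \<bullet>c u = 1"
    using cscalar_prod_self_real[OF w] by (simp add: s_def[symmetric] flip: of_real_mult)
  have uorth: "u \<bullet>c cs i = 0" "cs i \<bullet>c u = 0" if "i < k" for i
    using orth cs w u that cnj_cscalar_prod[of u n "cs i"]
    by (auto simp: u_def cscalar_prod_smult_left[of _ n])
  have Au: "A *\<^sub>v u = complex_of_real (Re e) \<cdot>\<^sub>v u"
    unfolding u_def using A w Aw e by (simp add: mult_mat_vec smult_smult_assoc mult.commute)
  define cs' where "cs' = cs(k := u)"
  define lam' where "lam' = lam(k := Re e)"
  have "\<forall>i<Suc k. cs' i \<in> carrier_vec n"
    using cs u by (simp add: cs'_def less_Suc_eq)
  moreover have "\<forall>i<Suc k. \<forall>j<Suc k. cs' i \<bullet>c cs' j = (if i = j then 1 else 0)"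
    using orthonormal uu uorth by (simp add: cs'_def less_Suc_eq)
  moreover have "\<forall>i<Suc k. A *\<^sub>v cs' i = complex_of_real (lam' i) \<cdot>\<^sub>v cs' i"
    using eigen Au by (simp add: cs'_def lam'_def less_Suc_eq)
  ultimately show ?case
    by blast
qed simp

definition diag_in_basis :: "nat \<Rightarrow> (nat \<Rightarrow> complex vec) \<Rightarrow> (nat \<Rightarrow> complex) \<Rightarrow> complex mat \<Rightarrow> bool" where
  "diag_in_basis n cs \<mu> A \<longleftrightarrow>
     (\<forall>x<n. \<forall>y<n. A $$ (x, y) = (\<Sum>i<n. \<mu> i * (cs i $ x * cnj (cs i $ y))))"

lemma orthonormal_basis_complete:
  fixes cs :: "nat \<Rightarrow> complex vec"
  assumes cs: "\<forall>i<n. cs i \<in> carrier_vec n"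
    and orthonormal: "\<forall>i<n. \<forall>j<n. cs i \<bullet>c cs j = (if i = j then 1 else 0)"
  shows "diag_in_basis n cs (\<lambda>_. 1) (1\<^sub>m n)"
  unfolding diag_in_basis_def
proof (intro allI impI)
  define U where "U = mat n n (\<lambda>(x, i). cs i $ x)"
  have U: "U \<in> carrier_mat n n" and V: "mat_adjoint U \<in> carrier_mat n n"
    by (simp_all add: U_def)
  have "mat_adjoint U * U = 1\<^sub>m n"
    unfolding U_def by (rule orthonormal_mat_adjoint_mult[OF cs orthonormal])
  then have UV: "U * mat_adjoint U = 1\<^sub>m n"
    by (rule mat_mult_left_right_inverse[OF V U])
  fix x y
  assume xy: "x < n" "y < n"
  have "(\<Sum>i<n. 1 * (cs i $ x * cnj (cs i $ y))) = (U * mat_adjoint U) $$ (x, y)"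
    using xy by (subst mult_mat_index_sum[OF U V]) (auto simp: U_def)
  then show "1\<^sub>m n $$ (x, y) = (\<Sum>i<n. 1 * (cs i $ x * cnj (cs i $ y)))"
    using UV xy by simp
qed

lemma diag_in_basis_eigenbasis:
  fixes A :: "complex mat"
  assumes A: "A \<in> carrier_mat n n" and cs: "\<forall>i<n. cs i \<in> carrier_vec n"
    and eigen: "\<forall>i<n. A *\<^sub>v cs i = \<mu> i \<cdot>\<^sub>v cs i" and complete: "diag_in_basis n cs (\<lambda>_. 1) (1\<^sub>m n)"
  shows "diag_in_basis n cs \<mu> A"
  unfolding diag_in_basis_def
proof (intro allI impI)
  fix x y
  assume xy: "x < n" "y < n"
  have "(\<Sum>i<n. \<mu> i * (cs i $ x * cnj (cs i $ y))) = (\<Sum>i<n. (A *\<^sub>v cs i) $ x * cnj (cs i $ y))"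
    using eigen cs xy by (intro sum.cong refl) auto
  also have "\<dots> = (\<Sum>i<n. (\<Sum>z<n. A $$ (x, z) * cs i $ z) * cnj (cs i $ y))"
    using cs xy by (intro sum.cong refl) (simp add: mult_mat_vec_index_sum[OF A] del: index_mult_mat_vec)
  also have "\<dots> = (\<Sum>z<n. A $$ (x, z) * (\<Sum>i<n. 1 * (cs i $ z * cnj (cs i $ y))))"
    by (simp add: sum_distrib_left sum_distrib_right mult_ac) (rule sum.swap)
  also have "\<dots> = (\<Sum>z<n. A $$ (x, z) * 1\<^sub>m n $$ (z, y))"
    using complete xy(2) by (intro sum.cong refl) (simp add: diag_in_basis_def)
  also have "\<dots> = A $$ (x, y)"
    using xy by (simp add: if_distrib cong: if_cong)
  finally show "A $$ (x, y) = (\<Sum>i<n. \<mu> i * (cs i $ x * cnj (cs i $ y)))" ..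
qed

lemma hermitian_spectral_decomposition:
  fixes A :: "complex mat"
  assumes H: "hermitian_mat n A"
  obtains cs and lam :: "nat \<Rightarrow> real"
  where "\<forall>i<n. cs i \<in> carrier_vec n"
    and "\<forall>i<n. \<forall>j<n. cs i \<bullet>c cs j = (if i = j then 1 else 0)"
    and "\<forall>i<n. A *\<^sub>v cs i = complex_of_real (lam i) \<cdot>\<^sub>v cs i"
    and "diag_in_basis n cs (\<lambda>_. 1) (1\<^sub>m n)"
    and "diag_in_basis n cs (\<lambda>i. complex_of_real (lam i)) A"
proof -
  obtain cs and lam :: "nat \<Rightarrow> real" where cs: "\<forall>i<n. cs i \<in> carrier_vec n"
    and orthonormal: "\<forall>i<n. \<forall>j<n. cs i \<bullet>c cs j = (if i = j then 1 else 0)"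
    and eigen: "\<forall>i<n. A *\<^sub>v cs i = complex_of_real (lam i) \<cdot>\<^sub>v cs i"
    using hermitian_orthonormal_eigenvectors[OF H, of n] by auto
  note complete = orthonormal_basis_complete[OF cs orthonormal]
  show ?thesis
    using that[OF cs orthonormal eigen complete]
      diag_in_basis_eigenbasis[OF hermitian_mat_carrier[OF H] cs eigen complete]
    by blast
qed

lemma basis_expansion:
  assumes complete: "diag_in_basis n cs (\<lambda>_. 1) (1\<^sub>m n)" and v: "v \<in> carrier_vec n"
    and cs: "\<forall>i<n. cs i \<in> carrier_vec n" and x: "x < n"
  shows "v $ x = (\<Sum>i<n. (v \<bullet>c cs i) * cs i $ x)"
proof -
  have "(\<Sum>i<n. (v \<bullet>c cs i) * cs i $ x) = (\<Sum>i<n. \<Sum>y<n. v $ y * (cs i $ x * cnj (cs i $ y)))"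
    using cs v by (intro sum.cong refl) (simp add: cscalar_prod_eq_sum[of _ n] sum_distrib_left sum_distrib_right mult_ac)
  also have "\<dots> = (\<Sum>y<n. v $ y * (if x = y then 1 else 0))"
    using complete x by (subst sum.swap) (simp add: diag_in_basis_def sum_distrib_left[symmetric])
  also have "\<dots> = v $ x"
    using x by (simp add: if_distrib cong: if_cong)
  finally show ?thesis ..
qed

lemma hermitian_fixed_vector_orthogonal:
  assumes H: "hermitian_mat n A" and v: "v \<in> carrier_vec n" "A *\<^sub>v v = v"
    and w: "w \<in> carrier_vec n" "A *\<^sub>v w = complex_of_real r \<cdot>\<^sub>v w" and r: "r \<noteq> 1"
  shows "v \<bullet>c w = 0"
proof -
  have "v \<bullet>c w = v \<bullet>c (A *\<^sub>v w)"
    using hermitian_cscalar_prod[OF H v(1) w(1)] v(2) by simp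
  also have "\<dots> = complex_of_real r * (v \<bullet>c w)"
    using v w by (simp add: cscalar_prod_smult_right[of _ n])
  finally have "(complex_of_real r - 1) * (v \<bullet>c w) = 0"
    by (simp add: algebra_simps)
  with r show ?thesis
    by simp
qed

section \<open>Product eigenbasis of tensor powers\<close>

definition tensor_basis_vec :: "nat \<Rightarrow> nat \<Rightarrow> (nat \<Rightarrow> complex vec) \<Rightarrow> (nat \<Rightarrow> nat) \<Rightarrow> complex vec" where
  "tensor_basis_vec D n cs c = vec (D ^ n) (\<lambda>a. \<Prod>k<n. cs (c k) $ digit D k a)"

definition diag_weight :: "nat \<Rightarrow> nat \<Rightarrow> (nat \<Rightarrow> complex vec) \<Rightarrow> complex mat \<Rightarrow> (nat \<Rightarrow> nat) \<Rightarrow> complex" where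
  "diag_weight D n cs \<rho> c = (\<rho> *\<^sub>v tensor_basis_vec D n cs c) \<bullet>c tensor_basis_vec D n cs c"

abbreviation configs :: "nat \<Rightarrow> nat \<Rightarrow> (nat \<Rightarrow> nat) set" where
  "configs D n \<equiv> PiE {..<n} (\<lambda>_. {..<D})"

lemma tensor_basis_vec_carrier [simp]: "tensor_basis_vec D n cs c \<in> carrier_vec (D ^ n)"
  by (simp add: tensor_basis_vec_def)

lemma tensor_basis_vec_index: "a < D ^ n \<Longrightarrow> tensor_basis_vec D n cs c $ a = (\<Prod>k<n. cs (c k) $ digit D k a)"
  by (simp add: tensor_basis_vec_def)

lemma diag_weight_eq_sum:
  assumes "\<rho> \<in> carrier_mat (D ^ n) (D ^ n)"
  shows "diag_weight D n cs \<rho> c =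
    (\<Sum>b<D ^ n. \<Sum>a<D ^ n. \<rho> $$ (b, a) * tensor_basis_vec D n cs c $ a * cnj (tensor_basis_vec D n cs c $ b))"
  using assms by (simp add: diag_weight_def cscalar_prod_eq_sum[of _ "D ^ n"] mult_mat_vec_index_sum[OF assms]
      sum_distrib_right del: index_mult_mat_vec)

lemma tensor_last_carrier [simp]: "tensor_last D N \<Omega> X \<in> carrier_mat (D ^ Suc N) (D ^ Suc N)"
  by (simp add: tensor_last_def)

lemma tensor_last_index:
  fixes \<mu> \<nu> :: "nat \<Rightarrow> complex"
  assumes D: "0 < D" and \<Omega>: "diag_in_basis D cs \<mu> \<Omega>" and X: "diag_in_basis D cs \<nu> X"
    and a: "a < D ^ Suc N" and b: "b < D ^ Suc N"
  shows "tensor_last D N \<Omega> X $$ (a, b) = (\<Sum>c\<in>configs D (Suc N).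
     ((\<Prod>k<N. \<mu> (c k)) * \<nu> (c N)) * (tensor_basis_vec D (Suc N) cs c $ a * cnj (tensor_basis_vec D (Suc N) cs c $ b)))"
proof -
  define \<mu>' where "\<mu>' = (\<lambda>k. if k < N then \<mu> else \<nu>)"
  define E where "E = (\<lambda>k i. cs i $ digit D k a * cnj (cs i $ digit D k b))"
  have "tensor_last D N \<Omega> X $$ (a, b) = (\<Prod>k<Suc N. \<Sum>i<D. \<mu>' k i * E k i)"
    using a b \<Omega> X by (simp add: tensor_last_def diag_in_basis_def \<mu>'_def E_def digit_less[OF D])
  also have "\<dots> = (\<Sum>c\<in>configs D (Suc N). \<Prod>k<Suc N. \<mu>' k (c k) * E k (c k))"
    by (rule prod_sum_PiE) auto
  also have "\<dots> = (\<Sum>c\<in>configs D (Suc N).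
     ((\<Prod>k<N. \<mu> (c k)) * \<nu> (c N)) * (tensor_basis_vec D (Suc N) cs c $ a * cnj (tensor_basis_vec D (Suc N) cs c $ b)))"
    using a b by (simp add: prod.distrib \<mu>'_def E_def tensor_basis_vec_index cnj_prod)
  finally show ?thesis .
qed

lemma mtrace_tensor_last_mult:
  fixes \<mu> \<nu> :: "nat \<Rightarrow> complex"
  assumes D: "0 < D" and \<Omega>: "diag_in_basis D cs \<mu> \<Omega>" and X: "diag_in_basis D cs \<nu> X"
    and \<rho>: "\<rho> \<in> carrier_mat (D ^ Suc N) (D ^ Suc N)"
  shows "mtrace (tensor_last D N \<Omega> X * \<rho>) =
    (\<Sum>c\<in>configs D (Suc N). ((\<Prod>k<N. \<mu> (c k)) * \<nu> (c N)) * diag_weight D (Suc N) cs \<rho> c)"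
proof -
  define M where "M = D ^ Suc N"
  define w where "w = (\<lambda>c. (\<Prod>k<N. \<mu> (c k)) * \<nu> (c N))"
  define v where "v = tensor_basis_vec D (Suc N) cs"
  have T: "tensor_last D N \<Omega> X \<in> carrier_mat M M"
    unfolding M_def by (rule tensor_last_carrier)
  have \<rho>': "\<rho> \<in> carrier_mat M M"
    using \<rho> unfolding M_def .
  have "mtrace (tensor_last D N \<Omega> X * \<rho>) = (\<Sum>a<M. \<Sum>b<M. tensor_last D N \<Omega> X $$ (a, b) * \<rho> $$ (b, a))"
    unfolding mtrace_def using T \<rho>'
    by (intro sum.cong) (auto simp: mult_mat_index_sum[OF T \<rho>'] simp del: index_mult_mat(1))
  also have "\<dots> = (\<Sum>a<M. \<Sum>b<M. \<Sum>c\<in>configs D (Suc N). w c * (\<rho> $$ (b, a) * v c $ a * cnj (v c $ b)))"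
    by (intro sum.cong refl)
      (simp add: tensor_last_index[OF D \<Omega> X] M_def w_def v_def sum_distrib_right sum_distrib_left mult_ac)
  also have "\<dots> = (\<Sum>c\<in>configs D (Suc N). \<Sum>b<M. \<Sum>a<M. w c * (\<rho> $$ (b, a) * v c $ a * cnj (v c $ b)))"
    by (subst sum.swap, subst (2) sum.swap, subst sum.swap) (rule refl)
  also have "\<dots> = (\<Sum>c\<in>configs D (Suc N). w c * diag_weight D (Suc N) cs \<rho> c)"
    by (intro sum.cong refl) (simp add: diag_weight_eq_sum[OF \<rho>] M_def v_def sum_distrib_left mult_ac)
  finally show ?thesis
    by (simp add: w_def)
qed

lemma tensor_last_one: 
  assumes D: "0 < D"
  shows "tensor_last D N (1\<^sub>m D) (1\<^sub>m D) = 1\<^sub>m (D ^ Suc N)"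
proof (rule eq_matI)
  fix a b
  assume "a < dim_row (1\<^sub>m (D ^ Suc N))" "b < dim_col (1\<^sub>m (D ^ Suc N))"
  then have a: "a < D ^ Suc N" and b: "b < D ^ Suc N"
    by auto
  have "tensor_last D N (1\<^sub>m D) (1\<^sub>m D) $$ (a, b) = (\<Prod>k<Suc N. if digit D k a = digit D k b then 1 else 0)"
    using a b by (simp add: tensor_last_def digit_less[OF D])
  also have "\<dots> = (if \<forall>k<Suc N. digit D k a = digit D k b then 1 else 0)"
    by (induction N) (auto simp: less_Suc_eq)
  also have "\<dots> = 1\<^sub>m (D ^ Suc N) $$ (a, b)"
    using digits_eq_imp_eq[OF D a b] a b by auto
  finally show "tensor_last D N (1\<^sub>m D) (1\<^sub>m D) $$ (a, b) = 1\<^sub>m (D ^ Suc N) $$ (a, b)" .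
qed (auto simp: tensor_last_def)

lemma sum_diag_weight:
  assumes D: "0 < D" and complete: "diag_in_basis D cs (\<lambda>_. 1) (1\<^sub>m D)"
    and \<rho>: "\<rho> \<in> carrier_mat (D ^ Suc N) (D ^ Suc N)"
  shows "(\<Sum>c\<in>configs D (Suc N). diag_weight D (Suc N) cs \<rho> c) = mtrace \<rho>"
  using mtrace_tensor_last_mult[OF D complete complete \<rho>] \<rho> by (simp add: tensor_last_one[OF D])

lemma tensor_basis_vec_perm_index:
  assumes D: "0 < D" and \<sigma>: "\<sigma> permutes {..<n}" and a: "a < D ^ n"
  shows "tensor_basis_vec D n cs c $ perm_index D n (Hilbert_Choice.inv \<sigma>) a = tensor_basis_vec D n cs (c \<circ> \<sigma>) $ a"
proof -
  have "tensor_basis_vec D n cs c $ perm_index D n (Hilbert_Choice.inv \<sigma>) a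
      = (\<Prod>k<n. cs (c k) $ digit D (Hilbert_Choice.inv \<sigma> k) a)"
    using perm_index_less[OF D] by (simp add: tensor_basis_vec_index digit_perm_index[OF D])
  also have "\<dots> = (\<Prod>k<n. (\<lambda>j. cs (c (\<sigma> j)) $ digit D j a) (Hilbert_Choice.inv \<sigma> k))"
    using permutes_inverses(1)[OF \<sigma>] by simp
  also have "\<dots> = (\<Prod>j<n. cs (c (\<sigma> j)) $ digit D j a)"
    using prod.permute[OF permutes_inv[OF \<sigma>], of "\<lambda>j. cs (c (\<sigma> j)) $ digit D j a"] by (simp add: comp_def)
  also have "\<dots> = tensor_basis_vec D n cs (c \<circ> \<sigma>) $ a"
    using a by (simp add: tensor_basis_vec_index)
  finally show ?thesis .
qed

lemma diag_weight_permute: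
  assumes D: "0 < D" and \<sigma>: "\<sigma> permutes {..<n}" and invariant: "perm_invariant D n \<rho>"
    and \<rho>: "\<rho> \<in> carrier_mat (D ^ n) (D ^ n)"
  shows "diag_weight D n cs \<rho> (c \<circ> \<sigma>) = diag_weight D n cs \<rho> c"
proof -
  define p where "p = perm_index D n (Hilbert_Choice.inv \<sigma>)"
  define v where "v = tensor_basis_vec D n cs"
  have bij: "bij_betw p {..<D ^ n} {..<D ^ n}"
    unfolding p_def using D permutes_inv[OF \<sigma>] by (rule bij_betw_perm_index)
  have \<rho>p: "\<rho> $$ (p b, p a) = \<rho> $$ (b, a)" if "a < D ^ n" "b < D ^ n" for a b
    using invariant permutes_inv[OF \<sigma>] that unfolding perm_invariant_def p_def by blast
  have "diag_weight D n cs \<rho> c = (\<Sum>b<D ^ n. \<Sum>a<D ^ n. \<rho> $$ (b, a) * v c $ a * cnj (v c $ b))"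
    unfolding v_def by (rule diag_weight_eq_sum[OF \<rho>])
  also have "\<dots> = (\<Sum>b<D ^ n. \<Sum>a<D ^ n. \<rho> $$ (p b, p a) * v c $ p a * cnj (v c $ p b))"
    by (subst sum.reindex_bij_betw[OF bij, symmetric], rule sum.cong[OF refl],
        subst sum.reindex_bij_betw[OF bij, symmetric]) (rule refl)
  also have "\<dots> = (\<Sum>b<D ^ n. \<Sum>a<D ^ n. \<rho> $$ (b, a) * v (c \<circ> \<sigma>) $ a * cnj (v (c \<circ> \<sigma>) $ b))"
    by (intro sum.cong refl) (simp add: \<rho>p[unfolded p_def] p_def v_def tensor_basis_vec_perm_index[OF D \<sigma>])
  also have "\<dots> = diag_weight D n cs \<rho> (c \<circ> \<sigma>)"
    unfolding v_def by (rule diag_weight_eq_sum[OF \<rho>, symmetric])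
  finally show ?thesis ..
qed

lemma diag_weight_nonneg: "psd_mat (D ^ n) \<rho> \<Longrightarrow> 0 \<le> Re (diag_weight D n cs \<rho> c)"
  unfolding psd_mat_def diag_weight_def by simp

lemma density_op_carrier: "density_op n \<rho> \<Longrightarrow> \<rho> \<in> carrier_mat n n"
  unfolding density_op_def psd_mat_def hermitian_mat_def by blast

lemma sum_diag_weight_density_op:
  assumes D: "0 < D" and complete: "diag_in_basis D cs (\<lambda>_. 1) (1\<^sub>m D)"
    and \<rho>: "density_op (D ^ Suc N) \<rho>"
  shows "(\<Sum>c\<in>configs D (Suc N). Re (diag_weight D (Suc N) cs \<rho> c)) = 1"
  using sum_diag_weight[OF D complete density_op_carrier[OF \<rho>]] \<rho>
  by (simp add: density_op_def flip: Re_sum)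

lemma diag_weight_transpose:
  assumes D: "0 < D" and \<rho>: "admissible D N \<rho>" and j: "j < Suc N"
  shows "diag_weight D (Suc N) cs \<rho> (c \<circ> Transposition.transpose j N) = diag_weight D (Suc N) cs \<rho> c"
proof (rule diag_weight_permute[OF D])
  show "Transposition.transpose j N permutes {..<Suc N}"
    using j by (intro permutes_swap_id) auto
qed (use \<rho> in \<open>auto simp: admissible_def dest: density_op_carrier\<close>)

lemma p_val_eq_sum:
  fixes lam :: "nat \<Rightarrow> real"
  assumes D: "0 < D" and \<Omega>: "diag_in_basis D cs (\<lambda>i. complex_of_real (lam i)) \<Omega>"
    and complete: "diag_in_basis D cs (\<lambda>_. 1) (1\<^sub>m D)" and \<rho>: "density_op (D ^ Suc N) \<rho>"
  shows "p_val D N \<Omega> \<rho> =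
    (\<Sum>c\<in>configs D (Suc N). Re (diag_weight D (Suc N) cs \<rho> c) * (\<Prod>k<N. lam (c k)))"
  using mtrace_tensor_last_mult[OF D \<Omega> complete density_op_carrier[OF \<rho>]]
  by (simp add: p_val_def Re_sum mult.commute flip: of_real_prod)

lemma f_val_eq_sum:
  fixes lam :: "nat \<Rightarrow> real"
  assumes D: "0 < D" and \<Omega>: "diag_in_basis D cs (\<lambda>i. complex_of_real (lam i)) \<Omega>"
    and \<Psi>: "diag_in_basis D cs (\<lambda>i. if i = i0 then 1 else 0) (proj D \<Psi>)" and \<rho>: "density_op (D ^ Suc N) \<rho>"
  shows "f_val D N \<Omega> \<Psi> \<rho> = (\<Sum>c\<in>configs D (Suc N).
    Re (diag_weight D (Suc N) cs \<rho> c) * ((\<Prod>k<N. lam (c k)) * (if c N = i0 then 1 else 0)))"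
  using mtrace_tensor_last_mult[OF D \<Omega> \<Psi> density_op_carrier[OF \<rho>]]
  by (simp add: f_val_def Re_sum mult.commute if_distrib[of Re] if_distrib[of Im] flip: of_real_prod cong: if_cong)

section \<open>An inequality for slot-symmetric weights\<close>

lemma has_real_derivative_x_ln_inverse:
  "0 < x \<Longrightarrow> ((\<lambda>x. x * ln (1 / x)) has_real_derivative (- ln x - 1)) (at x)"
proof -
  assume x: "0 < x"
  have "((\<lambda>x. x * ln (1 / x)) has_real_derivative (1 * ln (1 / x) + x * (1 / (1 / x) * (- 1 / x ^ 2)))) (at x)"
    using x by (auto intro!: derivative_eq_intros DERIV_ln_divide simp: power2_eq_square)
  moreover have "1 * ln (1 / x) + x * (1 / (1 / x) * (- 1 / x ^ 2)) = - ln x - 1"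
    using x by (simp add: ln_div power2_eq_square)
  ultimately show ?thesis
    by simp
qed

lemma x_ln_inverse_mono:
  fixes u v :: real
  assumes "0 < u" "u \<le> v" "v \<le> exp (-1)"
  shows "u * ln (1 / u) \<le> v * ln (1 / v)"
proof (rule DERIV_nonneg_imp_nondecreasing[of u v, where f = "\<lambda>x. x * ln (1 / x)", simplified])
  fix x
  assume x: "u \<le> x" "x \<le> v"
  with assms have x0: "0 < x"
    by simp
  with x assms have "ln x \<le> -1"
    by (metis exp_le_cancel_iff exp_ln order.trans)
  with x0 show "\<exists>y. ((\<lambda>x. x * ln (1 / x)) has_real_derivative y) (at x) \<and> 0 \<le> y"
    by (intro exI[of _ "- ln x - 1"]) (simp add: has_real_derivative_x_ln_inverse)
qed (use assms in auto)

lemma x_ln_inverse_antimono: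
  fixes u v :: real
  assumes "exp (-1) \<le> u" "u \<le> v"
  shows "v * ln (1 / v) \<le> u * ln (1 / u)"
proof (rule DERIV_nonpos_imp_nonincreasing[of u v, where f = "\<lambda>x. x * ln (1 / x)", simplified])
  fix x
  assume x: "u \<le> x" "x \<le> v"
  with assms have x0: "0 < x"
    by (meson exp_gt_zero less_le_trans order.trans)
  with x assms have "-1 \<le> ln x"
    by (metis exp_le_cancel_iff exp_ln order.trans)
  with x0 show "\<exists>y. ((\<lambda>x. x * ln (1 / x)) has_real_derivative y) (at x) \<and> y \<le> 0"
    by (intro exI[of _ "- ln x - 1"]) (simp add: has_real_derivative_x_ln_inverse)
qed (use assms in auto)

lemma x_ln_inverse_ge_min:
  fixes \<tau> x \<beta> :: real
  assumes "0 < \<tau>" "\<tau> \<le> x" "x \<le> \<beta>"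
  shows "min (\<tau> * ln (1 / \<tau>)) (\<beta> * ln (1 / \<beta>)) \<le> x * ln (1 / x)"
proof (cases "x \<le> exp (-1)")
  case True
  then show ?thesis
    using x_ln_inverse_mono[OF assms(1,2) True] by (simp add: min.coboundedI1)
next
  case False
  then show ?thesis
    using x_ln_inverse_antimono[of x \<beta>] assms by (simp add: min.coboundedI2)
qed

lemma inverse_min_x_ln_inverse_bounds:
  fixes \<tau> \<beta> h :: real
  assumes \<tau>: "0 < \<tau>" "\<tau> \<le> \<beta>" and \<beta>: "\<beta> < 1"
    and h: "h = 1 / min (\<beta> * ln (1 / \<beta>)) (\<tau> * ln (1 / \<tau>))"
  shows "0 < h" and "1 / ln (1 / \<beta>) \<le> h"
    and "\<And>y. \<tau> \<le> y \<Longrightarrow> y \<le> \<beta> \<Longrightarrow> 1 \<le> h * (y * ln (1 / y))"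
proof -
  define m where "m = min (\<beta> * ln (1 / \<beta>)) (\<tau> * ln (1 / \<tau>))"
  have m: "0 < m"
    using \<tau> \<beta> by (simp add: m_def)
  then show "0 < h"
    by (simp add: h m_def[symmetric])
  have "m \<le> \<beta> * ln (1 / \<beta>)"
    by (simp add: m_def)
  also have "\<dots> \<le> ln (1 / \<beta>)"
    using \<tau> \<beta> by simp
  finally show "1 / ln (1 / \<beta>) \<le> h"
    using m by (simp add: h m_def[symmetric] frac_le)
  fix y
  assume "\<tau> \<le> y" "y \<le> \<beta>"
  then have "m \<le> y * ln (1 / y)"
    using x_ln_inverse_ge_min[of \<tau> y \<beta>] \<tau> by (simp add: m_def min.commute)
  then show "1 \<le> h * (y * ln (1 / y))"
    using m by (simp add: h m_def[symmetric] field_simps)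
qed

lemma ratio_bound_coefficients:
  fixes a b h n B :: real
  assumes b: "0 < b" and hb: "1 / b \<le> h" and a: "0 \<le> a" and n: "0 < n"
    and B: "B = (n - a / b) / (n - a / b + h * a)"
  shows "B \<le> 1" and "n * (1 - B) = ((1 - B) / b + B * h) * a"
proof -
  define d where "d = n - a / b + h * a"
  have "a / b \<le> h * a"
    using mult_right_mono[OF hb a] by simp
  then have d: "0 < d"
    using n by (simp add: d_def)
  then have Bd: "B * d = n - a / b"
    by (simp add: B d_def[symmetric])
  have "0 < 1 / b"
    using b by simp
  with hb have "0 \<le> h"
    by linarith
  with a have "0 \<le> h * a"
    by simp
  then have "n - a / b \<le> d"
    by (simp add: d_def)
  with d show "B \<le> 1"
    by (simp add: B d_def[symmetric] divide_le_eq)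
  have "(1 - B) * d = d - B * d"
    by (simp add: algebra_simps)
  then have Bd1: "(1 - B) * d = h * a"
    unfolding Bd by (simp add: d_def)
  have "((1 - B) / b + B * h) * a * d = ((1 - B) * d) * a / b + (B * d) * h * a"
    by (simp add: algebra_simps add_divide_distrib)
  also have "\<dots> = n * ((1 - B) * d)"
    using b by (simp only: Bd Bd1) (simp add: algebra_simps)
  finally show "n * (1 - B) = ((1 - B) / b + B * h) * a"
    using d by simp
qed

lemma slot_lower_bound:
  fixes B b h \<Lambda> x :: real
  assumes B: "0 \<le> B" "B \<le> 1" and b: "0 < b" and \<Lambda>: "0 < \<Lambda>"
    and x: "x = 1 \<or> (0 < x \<and> b \<le> ln (1 / x) \<and> 1 \<le> h * (x * ln (1 / x)))"
  shows "\<Lambda> * ((1 - B) - ((1 - B) / b + B * h) * ln (1 / x)) \<le> (\<Lambda> / x) * ((if x = 1 then 1 else 0) - B)"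
proof (cases "x = 1")
  case False
  with x have x0: "0 < x" and lb: "b \<le> ln (1 / x)" and hl: "1 \<le> h * (x * ln (1 / x))"
    by auto
  define l where "l = ln (1 / x)"
  have "(1 - B) * (1 - l / b) \<le> 0"
    using B lb b by (intro mult_nonneg_nonpos) (auto simp: l_def field_simps)
  moreover have "B / x \<le> B * h * l"
  proof -
    have "B * 1 \<le> B * (h * (x * l))"
      using B hl by (intro mult_left_mono) (auto simp: l_def)
    then show ?thesis
      using x0 by (simp add: divide_le_eq mult_ac)
  qed
  moreover have "(1 - B) - ((1 - B) / b + B * h) * l = (1 - B) * (1 - l / b) - B * h * l"
    using b by (simp add: field_simps)
  ultimately have "(1 - B) - ((1 - B) / b + B * h) * l \<le> - (B / x)"
    by linarith
  then have "\<Lambda> * ((1 - B) - ((1 - B) / b + B * h) * l) \<le> \<Lambda> * (- (B / x))"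
    using \<Lambda> by (intro mult_left_mono) auto
  with False show ?thesis
    by (simp add: l_def field_simps)
qed (simp add: algebra_simps)

lemma slots_lower_bound:
  fixes x :: "nat \<Rightarrow> real" and B b h a :: real
  assumes slots: "\<And>j. j < n \<Longrightarrow> x j = 1 \<or> (0 < x j \<and> b \<le> ln (1 / x j) \<and> 1 \<le> h * (x j * ln (1 / x j)))"
    and B: "0 \<le> B" "B \<le> 1" and b: "0 < b"
    and key: "real n * (1 - B) = ((1 - B) / b + B * h) * a"
  defines "\<Lambda> \<equiv> \<Prod>j<n. x j"
  shows "((1 - B) / b + B * h) * (\<Lambda> * (a + ln \<Lambda>))
    \<le> (\<Sum>j<n. (\<Prod>k\<in>{..<n} - {j}. x k) * ((if x j = 1 then 1 else 0) - B))"
proof -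
  define c0 where "c0 = (1 - B) / b + B * h"
  have x0: "0 < x j" if "j < n" for j
    using slots[OF that] by auto
  then have \<Lambda>: "0 < \<Lambda>"
    unfolding \<Lambda>_def by (intro prod_pos) auto
  have "(\<Sum>j<n. ln (1 / x j)) = (\<Sum>j<n. - ln (x j))"
    using x0 by (intro sum.cong refl) (simp add: ln_div)
  also have "\<dots> = - (\<Sum>j<n. ln (x j))"
    by (simp add: sum_negf)
  also have "\<dots> = - ln \<Lambda>"
    unfolding \<Lambda>_def by (subst ln_prod) (auto dest: x0)
  finally have ln\<Lambda>: "(\<Sum>j<n. ln (1 / x j)) = - ln \<Lambda>" .
  have "(\<Sum>j<n. \<Lambda> * ((1 - B) - c0 * ln (1 / x j))) = \<Lambda> * (real n * (1 - B)) - \<Lambda> * c0 * (\<Sum>j<n. ln (1 / x j))"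
    by (simp add: right_diff_distrib sum_subtractf sum_distrib_left mult_ac)
  also have "\<dots> = \<Lambda> * (c0 * a) + \<Lambda> * c0 * ln \<Lambda>"
    using key by (simp only: c0_def[symmetric] ln\<Lambda>)
  also have "\<dots> = c0 * (\<Lambda> * (a + ln \<Lambda>))"
    by (simp add: algebra_simps)
  finally have "c0 * (\<Lambda> * (a + ln \<Lambda>)) = (\<Sum>j<n. \<Lambda> * ((1 - B) - c0 * ln (1 / x j)))" ..
  also have "\<dots> \<le> (\<Sum>j<n. (\<Lambda> / x j) * ((if x j = 1 then 1 else 0) - B))"
    unfolding c0_def using slot_lower_bound[OF B b \<Lambda> slots] by (intro sum_mono) auto
  also have "\<dots> = (\<Sum>j<n. (\<Prod>k\<in>{..<n} - {j}. x k) * ((if x j = 1 then 1 else 0) - B))"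
  proof (intro sum.cong refl)
    fix j
    assume j: "j \<in> {..<n}"
    then have "\<Lambda> = x j * (\<Prod>k\<in>{..<n} - {j}. x k)"
      unfolding \<Lambda>_def by (intro prod.remove) auto
    moreover have "0 < x j"
      using x0 j by simp
    ultimately show "\<Lambda> / x j * ((if x j = 1 then 1 else 0) - B)
        = (\<Prod>k\<in>{..<n} - {j}. x k) * ((if x j = 1 then 1 else 0) - B)"
      by simp
  qed
  finally show ?thesis
    by (simp add: c0_def)
qed

text \<open>Convexity of \<open>t \<mapsto> t ln t\<close>: its tangent at the mean \<open>m\<close> of \<open>y\<close> gives
  \<open>\<Sum> R y ln y \<ge> m ln m \<ge> -a m\<close>.\<close>
lemma sum_mult_ln_shift_nonneg:
  fixes R y :: "'c \<Rightarrow> real"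
  assumes fin: "finite S" and R: "\<forall>c\<in>S. 0 \<le> R c" and R1: "sum R S = 1"
    and y: "\<forall>c\<in>S. 0 < y c" and mean: "exp (- a) \<le> (\<Sum>c\<in>S. R c * y c)"
  shows "0 \<le> (\<Sum>c\<in>S. R c * (y c * (a + ln (y c))))"
proof -
  define m where "m = (\<Sum>c\<in>S. R c * y c)"
  have m0: "0 < m"
    using mean unfolding m_def by (meson exp_gt_zero less_le_trans)
  have lm: "- a \<le> ln m"
    using mean m0 unfolding m_def by (metis exp_le_cancel_iff exp_ln)
  have tangent: "y c * ln m + y c - m \<le> y c * ln (y c)" if c: "c \<in> S" for c
  proof -
    have yc: "0 < y c"
      using y c by auto
    have "y c * ln (m / y c) \<le> y c * (m / y c - 1)"
      using m0 yc by (intro mult_left_mono ln_le_minus_one) auto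
    moreover have "y c * (m / y c - 1) = m - y c"
      using yc by (simp add: field_simps)
    moreover have "y c * ln (m / y c) = y c * ln m - y c * ln (y c)"
      using yc m0 by (simp add: ln_div right_diff_distrib)
    ultimately show ?thesis
      by linarith
  qed
  have "(\<Sum>c\<in>S. R c * (y c * ln m + y c - m))
      = ln m * (\<Sum>c\<in>S. R c * y c) + (\<Sum>c\<in>S. R c * y c) - m * sum R S"
    by (simp add: algebra_simps sum.distrib sum_subtractf sum_distrib_left)
  then have "(\<Sum>c\<in>S. R c * (y c * ln m + y c - m)) = m * ln m"
    by (simp add: m_def[symmetric] R1)
  moreover have "(\<Sum>c\<in>S. R c * (y c * ln m + y c - m)) \<le> (\<Sum>c\<in>S. R c * (y c * ln (y c)))"
    using tangent R by (intro sum_mono mult_left_mono) auto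
  moreover have "0 \<le> m * (a + ln m)"
    using m0 lm by simp
  ultimately show ?thesis
    by (simp add: algebra_simps sum.distrib m_def sum_distrib_left)
qed

lemma comp_transpose_in_configs:
  "c \<in> configs D (Suc N) \<Longrightarrow> j < Suc N \<Longrightarrow> c \<circ> Transposition.transpose j N \<in> configs D (Suc N)"
  by (auto simp: PiE_iff transpose_def extensional_def)

lemma prod_comp_transpose:
  assumes j: "j < Suc N"
  shows "(\<Prod>k<N. g (c (Transposition.transpose j N k))) = (\<Prod>k\<in>{..<Suc N} - {j}. g (c k))"
proof -
  let ?t = "Transposition.transpose j N"
  have t: "?t permutes {..<Suc N}"
    using j by (intro permutes_swap_id) auto
  have "?t ` {..<N} = ?t ` ({..<Suc N} - {N})"
    by (simp add: lessThan_Suc)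
  also have "\<dots> = {..<Suc N} - {j}"
    using permutes_inj[OF t] permutes_image[OF t] by (simp add: image_set_diff)
  finally have "(\<Prod>k\<in>{..<Suc N} - {j}. g (c k)) = (\<Prod>k\<in>?t ` {..<N}. g (c k))"
    by simp
  also have "\<dots> = (\<Prod>k<N. g (c (?t k)))"
    by (subst prod.reindex) (auto intro: inj_on_subset[OF inj_transpose])
  finally show ?thesis
    by simp
qed

lemma sum_configs_symmetrize:
  fixes R :: "(nat \<Rightarrow> nat) \<Rightarrow> real" and g \<phi> :: "nat \<Rightarrow> real"
  assumes R: "\<forall>j<Suc N. \<forall>c\<in>configs D (Suc N). R (c \<circ> Transposition.transpose j N) = R c"
  shows "real (Suc N) * (\<Sum>c\<in>configs D (Suc N). R c * ((\<Prod>k<N. g (c k)) * \<phi> (c N)))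
    = (\<Sum>c\<in>configs D (Suc N). R c * (\<Sum>j<Suc N. (\<Prod>k\<in>{..<Suc N} - {j}. g (c k)) * \<phi> (c j)))"
proof -
  let ?C = "configs D (Suc N)" and ?G = "\<lambda>c. (\<Prod>k<N. g (c k)) * \<phi> (c N)"
  have "(\<Sum>c\<in>?C. R c * ?G c) = (\<Sum>c\<in>?C. R c * ((\<Prod>k\<in>{..<Suc N} - {j}. g (c k)) * \<phi> (c j)))"
    if j: "j < Suc N" for j
  proof -
    let ?t = "Transposition.transpose j N"
    have "(\<Sum>c\<in>?C. R c * ?G c) = (\<Sum>c\<in>?C. R (c \<circ> ?t) * ?G (c \<circ> ?t))"
      by (rule sum.reindex_bij_witness[where i = "\<lambda>c. c \<circ> ?t" and j = "\<lambda>c. c \<circ> ?t"])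
        (auto simp: comp_assoc comp_transpose_in_configs[OF _ j])
    also have "\<dots> = (\<Sum>c\<in>?C. R c * ((\<Prod>k\<in>{..<Suc N} - {j}. g (c k)) * \<phi> (c j)))"
      using R j by (intro sum.cong refl) (simp add: prod_comp_transpose[OF j, of g])
    finally show ?thesis .
  qed
  note slot = this
  have "(\<Sum>j<Suc N. \<Sum>c\<in>?C. R c * ?G c)
      = (\<Sum>j<Suc N. \<Sum>c\<in>?C. R c * ((\<Prod>k\<in>{..<Suc N} - {j}. g (c k)) * \<phi> (c j)))"
    by (rule sum.cong[OF refl], rule slot) simp
  then have "real (Suc N) * (\<Sum>c\<in>?C. R c * ?G c)
      = (\<Sum>j<Suc N. \<Sum>c\<in>?C. R c * ((\<Prod>k\<in>{..<Suc N} - {j}. g (c k)) * \<phi> (c j)))"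
    by (simp only: sum_constant card_lessThan of_nat_def)
  also have "\<dots> = (\<Sum>c\<in>?C. R c * (\<Sum>j<Suc N. (\<Prod>k\<in>{..<Suc N} - {j}. g (c k)) * \<phi> (c j)))"
    by (subst sum.swap) (simp only: sum_distrib_left)
  finally show ?thesis .
qed

lemma verification_spectrum_slot:
  fixes lam :: "nat \<Rightarrow> real" and \<tau> \<beta> h :: real
  assumes lam_i0: "lam i0 = 1" and lam_range: "\<forall>i<D. i \<noteq> i0 \<longrightarrow> \<tau> \<le> lam i \<and> lam i \<le> \<beta>"
    and \<tau>: "0 < \<tau>" "\<tau> \<le> \<beta>" and \<beta>: "\<beta> < 1"
    and h: "h = 1 / min (\<beta> * ln (1 / \<beta>)) (\<tau> * ln (1 / \<tau>))" and i: "i < D"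
  shows "lam i = 1 \<longleftrightarrow> i = i0"
    and "lam i = 1 \<or> (0 < lam i \<and> ln (1 / \<beta>) \<le> ln (1 / lam i) \<and> 1 \<le> h * (lam i * ln (1 / lam i)))"
proof -
  show "lam i = 1 \<longleftrightarrow> i = i0"
    using lam_range i lam_i0 \<beta> by force
  show "lam i = 1 \<or> (0 < lam i \<and> ln (1 / \<beta>) \<le> ln (1 / lam i) \<and> 1 \<le> h * (lam i * ln (1 / lam i)))"
  proof (cases "i = i0")
    case False
    then have range: "\<tau> \<le> lam i" "lam i \<le> \<beta>"
      using lam_range i by auto
    with \<tau> have "ln (1 / \<beta>) \<le> ln (1 / lam i)"
      by (simp add: frac_le)
    with range \<tau> inverse_min_x_ln_inverse_bounds(3)[OF \<tau> \<beta> h range] show ?thesis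
      by simp
  qed (simp add: lam_i0)
qed

lemma symmetric_weight_fidelity_bound:
  fixes R :: "(nat \<Rightarrow> nat) \<Rightarrow> real" and lam :: "nat \<Rightarrow> real" and a b h B :: real
  assumes slot: "\<And>i. i < D \<Longrightarrow>
      lam i = 1 \<or> (0 < lam i \<and> b \<le> ln (1 / lam i) \<and> 1 \<le> h * (lam i * ln (1 / lam i)))"
    and slot_one: "\<And>i. i < D \<Longrightarrow> lam i = 1 \<longleftrightarrow> i = i0"
    and R_nonneg: "\<forall>c\<in>configs D (Suc N). 0 \<le> R c" and R_sum: "sum R (configs D (Suc N)) = 1"
    and R_sym: "\<forall>j<Suc N. \<forall>c\<in>configs D (Suc N). R (c \<circ> Transposition.transpose j N) = R c"
    and B: "0 \<le> B" "B \<le> 1" and b: "0 < b" and h: "0 < h"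
    and key: "real (Suc N) * (1 - B) = ((1 - B) / b + B * h) * a"
    and mean: "exp (- a) \<le> (\<Sum>c\<in>configs D (Suc N). R c * (\<Prod>k<Suc N. lam (c k)))"
  shows "B * (\<Sum>c\<in>configs D (Suc N). R c * (\<Prod>k<N. lam (c k)))
     \<le> (\<Sum>c\<in>configs D (Suc N). R c * ((\<Prod>k<N. lam (c k)) * (if c N = i0 then 1 else 0)))"
proof -
  define C where "C = configs D (Suc N)"
  define c0 where "c0 = (1 - B) / b + B * h"
  define \<Lambda> where "\<Lambda> c = (\<Prod>k<Suc N. lam (c k))" for c :: "nat \<Rightarrow> nat"
  define W where "W j c = (\<Prod>k\<in>{..<Suc N} - {j}. lam (c k))" for j and c :: "nat \<Rightarrow> nat"
  define p where "p = (\<Sum>c\<in>C. R c * (\<Prod>k<N. lam (c k)))"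
  define f where "f = (\<Sum>c\<in>C. R c * ((\<Prod>k<N. lam (c k)) * (if c N = i0 then 1 else 0)))"
  have in_range: "c k < D" if "c \<in> C" "k < Suc N" for c k
    using that by (auto simp: C_def PiE_iff)
  have "0 < \<Lambda> c" if "c \<in> C" for c
    unfolding \<Lambda>_def using slot in_range[OF that] by (intro prod_pos) fastforce
  then have "0 \<le> (\<Sum>c\<in>C. R c * (\<Lambda> c * (a + ln (\<Lambda> c))))"
    using R_nonneg R_sum mean by (intro sum_mult_ln_shift_nonneg) (auto simp: C_def \<Lambda>_def intro: finite_PiE)
  moreover have "0 \<le> c0"
    using B b h by (simp add: c0_def)
  ultimately have "0 \<le> c0 * (\<Sum>c\<in>C. R c * (\<Lambda> c * (a + ln (\<Lambda> c))))"
    by simp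
  also have "\<dots> = (\<Sum>c\<in>C. R c * (c0 * (\<Lambda> c * (a + ln (\<Lambda> c)))))"
    by (simp add: sum_distrib_left mult_ac)
  also have "\<dots> \<le> (\<Sum>c\<in>C. R c * (\<Sum>j<Suc N. W j c * ((if lam (c j) = 1 then 1 else 0) - B)))"
    using slots_lower_bound[of "Suc N" "\<lambda>j. lam (c j)" b h B a for c] slot in_range B b key R_nonneg
    by (intro sum_mono mult_left_mono) (auto simp: c0_def \<Lambda>_def W_def C_def)
  also have "\<dots> = (\<Sum>c\<in>C. R c * (\<Sum>j<Suc N. W j c * ((if c j = i0 then 1 else 0) - B)))"
    using slot_one in_range by (intro sum.cong refl) (simp cong: if_cong)
  also have "\<dots> = real (Suc N) * f - B * (real (Suc N) * p)"
    using sum_configs_symmetrize[OF R_sym, of lam "\<lambda>i. if i = i0 then 1 else 0"]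
      sum_configs_symmetrize[OF R_sym, of lam "\<lambda>_. 1"]
    by (simp add: f_def p_def C_def W_def algebra_simps sum_subtractf sum_distrib_left)
  finally have "real (Suc N) * (B * p) \<le> real (Suc N) * f"
    by (simp add: algebra_simps)
  then have "B * p \<le> f"
    by (rule mult_left_le_imp_le) simp
  then show ?thesis
    by (simp add: p_def f_def C_def)
qed

lemma fidelity_bound_configs:
  fixes R :: "(nat \<Rightarrow> nat) \<Rightarrow> real" and lam :: "nat \<Rightarrow> real" and \<tau> \<beta> h x :: real
  assumes lam_i0: "lam i0 = 1"
    and lam_range: "\<forall>i<D. i \<noteq> i0 \<longrightarrow> \<tau> \<le> lam i \<and> lam i \<le> \<beta>"
    and \<tau>: "0 < \<tau>" "\<tau> \<le> \<beta>" and \<beta>: "\<beta> < 1"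
    and h: "h = 1 / min (\<beta> * ln (1 / \<beta>)) (\<tau> * ln (1 / \<tau>))"
    and R_nonneg: "\<forall>c\<in>configs D (Suc N). 0 \<le> R c" and R_sum: "sum R (configs D (Suc N)) = 1"
    and R_sym: "\<forall>j<Suc N. \<forall>c\<in>configs D (Suc N). R (c \<circ> Transposition.transpose j N) = R c"
    and x: "0 < x" "x \<le> 1"
    and mean: "x \<le> (\<Sum>c\<in>configs D (Suc N). R c * (\<Prod>k<Suc N. lam (c k)))"
  shows "(real N + 1 - ln x / ln \<beta>) / (real N + 1 - ln x / ln \<beta> - h * ln x)
       * (\<Sum>c\<in>configs D (Suc N). R c * (\<Prod>k<N. lam (c k)))
     \<le> (\<Sum>c\<in>configs D (Suc N). R c * ((\<Prod>k<N. lam (c k)) * (if c N = i0 then 1 else 0)))"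
proof -
  define a where "a = - ln x"
  define b where "b = ln (1 / \<beta>)"
  define B where "B = (real (Suc N) - a / b) / (real (Suc N) - a / b + h * a)"
  define p where "p = (\<Sum>c\<in>configs D (Suc N). R c * (\<Prod>k<N. lam (c k)))"
  define f where "f = (\<Sum>c\<in>configs D (Suc N). R c * ((\<Prod>k<N. lam (c k)) * (if c N = i0 then 1 else 0)))"
  have a: "0 \<le> a" and exp_a: "exp (- a) = x"
    using x by (simp_all add: a_def)
  have b: "0 < b"
    using \<tau> \<beta> by (simp add: b_def)
  note h_bounds = inverse_min_x_ln_inverse_bounds[OF \<tau> \<beta> h]
  have B1: "B \<le> 1" and key: "real (Suc N) * (1 - B) = ((1 - B) / b + B * h) * a"
    using ratio_bound_coefficients[OF b _ a _ B_def] h_bounds(2) by (simp_all add: b_def)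
  note slot = verification_spectrum_slot[OF lam_i0 lam_range \<tau> \<beta> h, folded b_def]
  have "B * p \<le> f"
  proof (cases "0 \<le> B")
    case True
    show ?thesis
      unfolding p_def f_def
      using symmetric_weight_fidelity_bound[OF slot(2) slot(1) R_nonneg R_sum R_sym True B1 b h_bounds(1) key]
        mean by (simp add: exp_a)
  next
    case False
    have "0 \<le> lam (c k)" if "c \<in> configs D (Suc N)" "k < Suc N" for c k
      using slot(2)[of "c k"] that by (fastforce simp: PiE_iff)
    then have "0 \<le> p" and "0 \<le> f"
      unfolding p_def f_def using R_nonneg by (auto intro!: sum_nonneg mult_nonneg_nonneg prod_nonneg)
    with False show ?thesis
      by (meson mult_nonpos_nonneg order.trans not_le less_imp_le)
  qed
  moreover have "B = (real N + 1 - ln x / ln \<beta>) / (real N + 1 - ln x / ln \<beta> - h * ln x)"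
    using \<tau> \<beta> by (simp add: B_def a_def b_def ln_div add.commute)
  ultimately show ?thesis
    by (simp add: p_def f_def)
qed

lemma config_sum_bounds:
  fixes R :: "(nat \<Rightarrow> nat) \<Rightarrow> real" and lam :: "nat \<Rightarrow> real"
  assumes lam_i0: "lam i0 = 1" and lam_ge: "\<forall>i<D. \<tau> \<le> lam i" and \<tau>: "0 < \<tau>"
    and R_nonneg: "\<forall>c\<in>configs D (Suc N). 0 \<le> R c"
  defines "p \<equiv> \<Sum>c\<in>configs D (Suc N). R c * (\<Prod>k<N. lam (c k))"
    and "f \<equiv> \<Sum>c\<in>configs D (Suc N). R c * ((\<Prod>k<N. lam (c k)) * (if c N = i0 then 1 else 0))"
    and "y \<equiv> \<Sum>c\<in>configs D (Suc N). R c * (\<Prod>k<Suc N. lam (c k))"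
  shows "\<tau> * p \<le> y" and "f \<le> y" and "f \<le> p"
proof -
  have slot: "\<tau> \<le> lam (c k)" "0 \<le> lam (c k)" if "c \<in> configs D (Suc N)" "k < Suc N" for c k
    using that lam_ge \<tau> by (auto simp: PiE_iff intro: order.trans[OF less_imp_le])
  then have prod: "0 \<le> (\<Prod>k<N. lam (c k))" if "c \<in> configs D (Suc N)" for c
    using that by (intro prod_nonneg) auto
  show "\<tau> * p \<le> y"
    unfolding p_def y_def sum_distrib_left
  proof (rule sum_mono)
    fix c
    assume c: "c \<in> configs D (Suc N)"
    have "(\<Prod>k<N. lam (c k)) * \<tau> \<le> (\<Prod>k<N. lam (c k)) * lam (c N)"
      using prod[OF c] slot[OF c] by (intro mult_left_mono) auto
    then have "R c * ((\<Prod>k<N. lam (c k)) * \<tau>) \<le> R c * ((\<Prod>k<N. lam (c k)) * lam (c N))"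
      using R_nonneg c by (simp add: mult_left_mono)
    then show "\<tau> * (R c * (\<Prod>k<N. lam (c k))) \<le> R c * (\<Prod>k<Suc N. lam (c k))"
      by (simp add: mult_ac)
  qed
  show "f \<le> y"
    unfolding f_def y_def
    using R_nonneg slot prod lam_i0 by (intro sum_mono) (simp add: mult_left_mono)
  show "f \<le> p"
    unfolding f_def p_def
    using R_nonneg prod by (intro sum_mono) (simp add: mult_left_mono)
qed

section \<open>Verification operators\<close>

lemma verification_operator_fixed_vector:
  assumes V: "verification_operator D \<Omega> \<Psi>"
    and u: "u \<in> carrier_vec D" "u \<bullet>c u = 1" "\<Omega> *\<^sub>v u = u"
  shows "\<exists>c. u = c \<cdot>\<^sub>v \<Psi> \<and> c * cnj c = 1"
proof -
  have \<Psi>: "\<Psi> \<in> carrier_vec D" "\<Psi> \<bullet>c \<Psi> = 1"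
    using V by (auto simp: verification_operator_def)
  obtain c where c: "u = c \<cdot>\<^sub>v \<Psi>"
    using V u(1,3) by (auto simp: verification_operator_def)
  with u(2) \<Psi> have "c * cnj c = 1"
    by (simp add: cscalar_prod_smult_left[of _ D] cscalar_prod_smult_right[of _ D] mult_ac)
  with c show ?thesis
    by blast
qed

lemma diag_in_basis_proj:
  assumes i0: "i0 < D" and c: "cs i0 = c \<cdot>\<^sub>v \<Psi>" "c * cnj c = 1" and \<Psi>: "\<Psi> \<in> carrier_vec D"
  shows "diag_in_basis D cs (\<lambda>i. if i = i0 then 1 else 0) (proj D \<Psi>)"
  unfolding diag_in_basis_def
proof (intro allI impI)
  fix x y
  assume xy: "x < D" "y < D"
  have "(\<Sum>i<D. (if i = i0 then 1 else 0) * (cs i $ x * cnj (cs i $ y)))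
      = (\<Sum>i<D. if i = i0 then cs i $ x * cnj (cs i $ y) else 0)"
    by (intro sum.cong refl) simp
  also have "\<dots> = (c * cnj c) * (\<Psi> $ x * cnj (\<Psi> $ y))"
    using i0 xy \<Psi> by (simp add: c(1) mult_ac)
  also have "\<dots> = proj D \<Psi> $$ (x, y)"
    using xy by (simp add: c(2) proj_def)
  finally show "proj D \<Psi> $$ (x, y) = (\<Sum>i<D. (if i = i0 then 1 else 0) * (cs i $ x * cnj (cs i $ y)))" ..
qed

lemma verification_operator_eigenbasis:
  assumes V: "verification_operator D \<Omega> \<Psi>"
  obtains cs and lam :: "nat \<Rightarrow> real" and i0
  where "lam i0 = 1" and "\<forall>i<D. i \<noteq> i0 \<longrightarrow> lam i \<noteq> 1"
    and "\<forall>i<D. eigenvalue \<Omega> (complex_of_real (lam i))"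
    and "diag_in_basis D cs (\<lambda>_. 1) (1\<^sub>m D)"
    and "diag_in_basis D cs (\<lambda>i. complex_of_real (lam i)) \<Omega>"
    and "diag_in_basis D cs (\<lambda>i. if i = i0 then 1 else 0) (proj D \<Psi>)"
proof -
  have \<Psi>: "\<Psi> \<in> carrier_vec D" "\<Psi> \<bullet>c \<Psi> = 1" and H: "hermitian_mat D \<Omega>"
    and fixed: "\<Omega> *\<^sub>v \<Psi> = \<Psi>"
    using V by (auto simp: verification_operator_def psd_mat_def)
  obtain cs and lam :: "nat \<Rightarrow> real" where cs: "\<forall>i<D. cs i \<in> carrier_vec D"
    and orthonormal: "\<forall>i<D. \<forall>j<D. cs i \<bullet>c cs j = (if i = j then 1 else 0)"
    and eigen: "\<forall>i<D. \<Omega> *\<^sub>v cs i = complex_of_real (lam i) \<cdot>\<^sub>v cs i"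
    and complete: "diag_in_basis D cs (\<lambda>_. 1) (1\<^sub>m D)"
    and \<Omega>: "diag_in_basis D cs (\<lambda>i. complex_of_real (lam i)) \<Omega>"
    by (rule hermitian_spectral_decomposition[OF H])
  have "cs i \<noteq> 0\<^sub>v D" if "i < D" for i
    using orthonormal that by force
  then have eigenvalues: "\<forall>i<D. eigenvalue \<Omega> (complex_of_real (lam i))"
    using cs eigen hermitian_mat_carrier[OF H] by (auto simp: eigenvalue_def eigenvector_def)
  have multiple: "\<exists>c. cs i = c \<cdot>\<^sub>v \<Psi> \<and> c * cnj c = 1" if i: "i < D" "lam i = 1" for i
    using verification_operator_fixed_vector[OF V] cs orthonormal eigen i by simp
  obtain i0 where i0: "i0 < D" "lam i0 = 1"
  proof (rule ccontr)
    assume "\<not> thesis"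
    with that have no_one: "\<forall>i<D. lam i \<noteq> 1"
      by blast
    have "\<Psi> \<bullet>c cs i = 0" if i: "i < D" for i
      using hermitian_fixed_vector_orthogonal[OF H \<Psi>(1) fixed] cs eigen no_one i by blast
    then have "\<Psi> $ x = 0" if x: "x < D" for x
      using basis_expansion[OF complete \<Psi>(1) cs x] by simp
    then have "\<Psi> \<bullet>c \<Psi> = 0"
      using \<Psi>(1) by (simp add: cscalar_prod_eq_sum)
    with \<Psi>(2) show False
      by simp
  qed
  obtain c0 where c0: "cs i0 = c0 \<cdot>\<^sub>v \<Psi>" "c0 * cnj c0 = 1"
    using multiple[OF i0] by blast
  have "lam i \<noteq> 1" if i: "i < D" "i \<noteq> i0" for i
  proof
    assume "lam i = 1"
    then obtain c where "cs i = c \<cdot>\<^sub>v \<Psi>" "c * cnj c = 1"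
      using multiple i by blast
    moreover have "cs i \<bullet>c cs i0 = 0"
      using orthonormal i i0 by simp
    ultimately show False
      using c0 \<Psi> by (auto simp: cscalar_prod_smult_left[of _ D] cscalar_prod_smult_right[of _ D])
  qed
  with that i0(2) eigenvalues complete \<Omega> diag_in_basis_proj[where cs = cs, OF i0(1) c0 \<Psi>(1)] show ?thesis
    by blast
qed

lemma fidelity_ratio_bound:
  fixes lam :: "nat \<Rightarrow> real" and \<tau> \<beta> h x :: real
  assumes D: "0 < D" and complete: "diag_in_basis D cs (\<lambda>_. 1) (1\<^sub>m D)"
    and \<Omega>: "diag_in_basis D cs (\<lambda>i. complex_of_real (lam i)) \<Omega>"
    and \<Psi>: "diag_in_basis D cs (\<lambda>i. if i = i0 then 1 else 0) (proj D \<Psi>)"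
    and lam_i0: "lam i0 = 1" and lam_range: "\<forall>i<D. i \<noteq> i0 \<longrightarrow> \<tau> \<le> lam i \<and> lam i \<le> \<beta>"
    and \<tau>: "0 < \<tau>" "\<tau> \<le> \<beta>" and \<beta>: "\<beta> < 1"
    and h: "h = 1 / min (\<beta> * ln (1 / \<beta>)) (\<tau> * ln (1 / \<tau>))"
    and \<rho>: "admissible D N \<rho>" and x: "0 < x" "x \<le> 1"
    and x_le: "x \<le> \<tau> * p_val D N \<Omega> \<rho> \<or> x \<le> f_val D N \<Omega> \<Psi> \<rho>"
  shows "(real N + 1 - ln x / ln \<beta>) / (real N + 1 - ln x / ln \<beta> - h * ln x)
    \<le> f_val D N \<Omega> \<Psi> \<rho> / p_val D N \<Omega> \<rho>"
proof -
  define R where "R c = Re (diag_weight D (Suc N) cs \<rho> c)" for c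
  have density: "density_op (D ^ Suc N) \<rho>"
    using \<rho> by (simp add: admissible_def)
  have R_nonneg: "\<forall>c\<in>configs D (Suc N). 0 \<le> R c"
    using density by (simp add: R_def density_op_def diag_weight_nonneg)
  have R_sum: "sum R (configs D (Suc N)) = 1"
    unfolding R_def by (rule sum_diag_weight_density_op[OF D complete density])
  have R_sym: "\<forall>j<Suc N. \<forall>c\<in>configs D (Suc N). R (c \<circ> Transposition.transpose j N) = R c"
    by (simp add: R_def diag_weight_transpose[OF D \<rho>])
  have p: "p_val D N \<Omega> \<rho> = (\<Sum>c\<in>configs D (Suc N). R c * (\<Prod>k<N. lam (c k)))"
    unfolding R_def by (rule p_val_eq_sum[OF D \<Omega> complete density])
  have f: "f_val D N \<Omega> \<Psi> \<rho> = (\<Sum>c\<in>configs D (Suc N). R c * ((\<Prod>k<N. lam (c k)) * (if c N = i0 then 1 else 0)))"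
    unfolding R_def by (rule f_val_eq_sum[OF D \<Omega> \<Psi> density])
  have lam_ge: "\<forall>i<D. \<tau> \<le> lam i"
    using lam_range lam_i0 \<tau> \<beta> by force
  note bounds = config_sum_bounds[OF lam_i0 lam_ge \<tau>(1) R_nonneg, folded p f]
  have mean: "x \<le> (\<Sum>c\<in>configs D (Suc N). R c * (\<Prod>k<Suc N. lam (c k)))"
    using x_le bounds by linarith
  have "0 < p_val D N \<Omega> \<rho>"
  proof (rule ccontr)
    assume p: "\<not> 0 < p_val D N \<Omega> \<rho>"
    then have "\<tau> * p_val D N \<Omega> \<rho> \<le> 0"
      using \<tau>(1) by (simp add: mult_nonneg_nonpos)
    with x_le x(1) bounds(3) p show False
      by (elim disjE) linarith+
  qed
  moreover have "(real N + 1 - ln x / ln \<beta>) / (real N + 1 - ln x / ln \<beta> - h * ln x) * p_val D N \<Omega> \<rho>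
      \<le> f_val D N \<Omega> \<Psi> \<rho>"
    unfolding p f by (rule fidelity_bound_configs[OF lam_i0 lam_range \<tau> \<beta> h R_nonneg R_sum R_sym x mean])
  ultimately show ?thesis
    by (simp add: pos_le_divide_eq)
qed

theorem lemma9:
  fixes D N :: nat and \<Omega> :: "complex mat" and \<Psi> :: "complex vec"
    and \<delta> f \<beta> \<tau> h :: real
  assumes "D \<ge> 2" and "N \<ge> 1"
    and "0 < \<delta>" "\<delta> \<le> 1" and "0 < f" "f \<le> 1"
    and "verification_operator D \<Omega> \<Psi>" and "pd_mat D \<Omega>"
    and "eigenvalue \<Omega> (complex_of_real \<beta>)" and "\<beta> \<noteq> 1"
    and "\<forall>\<mu>::real. eigenvalue \<Omega> (complex_of_real \<mu>) \<and> \<mu> \<noteq> 1 \<longrightarrow> \<mu> \<le> \<beta>"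
    and "eigenvalue \<Omega> (complex_of_real \<tau>)"
    and "\<forall>\<mu>::real. eigenvalue \<Omega> (complex_of_real \<mu>) \<longrightarrow> \<tau> \<le> \<mu>"
    and "0 < \<tau>" "\<tau> \<le> \<beta>" "\<beta> < 1"
    and "h = 1 / min (\<beta> * ln (1 / \<beta>)) (\<tau> * ln (1 / \<tau>))"
  shows "(\<forall>\<rho>. admissible D N \<rho> \<and> p_val D N \<Omega> \<rho> \<ge> \<delta> \<longrightarrow>
            f_val D N \<Omega> \<Psi> \<rho> / p_val D N \<Omega> \<rho> \<ge>
              (real N + 1 - ln (\<tau> * \<delta>) / ln \<beta>) /
              (real N + 1 - ln (\<tau> * \<delta>) / ln \<beta> - h * ln (\<tau> * \<delta>)))
       \<and> (\<forall>\<rho>. admissible D N \<rho> \<and> f_val D N \<Omega> \<Psi> \<rho> \<ge> f \<longrightarrow>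
            f_val D N \<Omega> \<Psi> \<rho> / p_val D N \<Omega> \<rho> \<ge>
              (real N + 1 - ln f / ln \<beta>) /
              (real N + 1 - ln f / ln \<beta> - h * ln f))"
proof -
  \<comment> \<open>\<open>pd_mat D \<Omega>\<close> follows from \<open>0 < \<tau>\<close>.\<close>
  obtain cs and lam :: "nat \<Rightarrow> real" and i0
    where lam_i0: "lam i0 = 1" and others: "\<forall>i<D. i \<noteq> i0 \<longrightarrow> lam i \<noteq> 1"
      and eigen: "\<forall>i<D. eigenvalue \<Omega> (complex_of_real (lam i))"
      and basis: "diag_in_basis D cs (\<lambda>_. 1) (1\<^sub>m D)"
        "diag_in_basis D cs (\<lambda>i. complex_of_real (lam i)) \<Omega>"
        "diag_in_basis D cs (\<lambda>i. if i = i0 then 1 else 0) (proj D \<Psi>)"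
    by (rule verification_operator_eigenbasis[OF assms(7)])
  have "\<forall>i<D. i \<noteq> i0 \<longrightarrow> \<tau> \<le> lam i \<and> lam i \<le> \<beta>"
    using others eigen assms(11,13) by blast
  note bound = fidelity_ratio_bound[OF _ basis lam_i0 this assms(14-17)]
  have "0 < \<tau> * \<delta>" "\<tau> * \<delta> \<le> 1"
    using assms(3,4,14-16) by (auto intro: mult_le_one)
  then show ?thesis
    using bound[of _ _ "\<tau> * \<delta>"] bound[of _ _ f] assms(1,3,5,6,14) by auto
qed

end
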